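(* Let $\mathcal{A}\in\mathbb{C}^{I_{1\ldots N}\times I_{1\ldots N}}$ with $\mathcal{A}\neq\mathcal{O}$, and let $\mathcal{M},\mathcal{N}\in\mathbb{C}^{I_{1\ldots N}\times I_{1\ldots N}}$ be Hermitian positive definite tensors. Then $$1\le\|\mathcal{A}\|_{\mathcal{M}\mathcal{N}}\,\|\mathcal{A}^{\dagger}_{\mathcal{M},\mathcal{N}}\|_{\mathcal{N}\mathcal{M}}\le4\,w(\tilde{\mathcal{A}})\,w(\tilde{\mathcal{A}}^{\dagger}),$$ where $\tilde{\mathcal{A}}=\mathcal{M}^{1/2}*_N\mathcal{A}*_N\mathcal{N}^{-1/2}$.
   Context: Write $I_{1\ldots N}$ for $I_1\times\cdots\times I_N$; $\mathcal{O}$ is the zero tensor. Einstein product: $(\mathcal{A}*_N\mathcal{B})_{i_1\ldots i_Nj_1\ldots j_L}=\sum_{k_1,\ldots,k_N}a_{i_1\ldots i_Nk_1\ldots k_N}b_{k_1\ldots k_Nj_1\ldots j_L}$ (also when $\mathcal{B}\in\mathbb{C}^{I_{1\ldots N}}$). $\mathcal{A}^H$ is the conjugate transpose; inverses are w.r.t. $*_N$. $\langle\mathcal{X},\mathcal{Y}\rangle=\mathcal{Y}^H*_N\mathcal{X}$, $\|\mathcal{X}\|=\langle\mathcal{X},\mathcal{X}\rangle^{1/2}$. $\mathcal{M}$ is Hermitian positive definite if $\mathcal{M}^H=\mathcal{M}$ and $\langle\mathcal{M}*_N\mathcal{X},\mathcal{X}\rangle>0$ for nonzero $\mathcal{X}$;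 $\mathcal{M}^{1/2}$ is its unique Hermitian positive definite square root and $\mathcal{N}^{-1/2}=(\mathcal{N}^{1/2})^{-1}$. Weighted norms: $\|\mathcal{X}\|_{\mathcal{M}}=\langle\mathcal{M}*_N\mathcal{X},\mathcal{X}\rangle^{1/2}$, $\|\mathcal{X}\|_{\mathcal{N}}=\langle\mathcal{N}*_N\mathcal{X},\mathcal{X}\rangle^{1/2}$, $\|\mathcal{A}\|_{\mathcal{M}\mathcal{N}}=\sup\{\|\mathcal{A}*_N\mathcal{X}\|_{\mathcal{M}}:\|\mathcal{X}\|_{\mathcal{N}}=1\}$, $\|\mathcal{B}\|_{\mathcal{N}\mathcal{M}}=\sup\{\|\mathcal{B}*_N\mathcal{X}\|_{\mathcal{N}}:\|\mathcal{X}\|_{\mathcal{M}}=1\}$. Numerical range $W(\mathcal{A})=\{\langle\mathcal{A}*_N\mathcal{X},\mathcal{X}\rangle:\|\mathcal{X}\|=1\}$ and numerical radius $w(\mathcal{A})=\max\{|z|:z\in W(\mathcal{A})\}$. Weighted Moore-Penrose inverse $\mathcal{A}^{\dagger}_{\mathcal{M},\mathcal{N}}$: the unique $\mathcal{X}$ with $\mathcal{A}*_N\mathcal{X}*_N\mathcal{A}=\mathcal{A}$, $\mathcal{X}*_N\mathcal{A}*_N\mathcal{X}=\mathcal{X}$, $(\mathcal{M}*_N\mathcal{A}*_N\mathcal{X})^H=\mathcal{M}*_N\mathcal{A}*_N\mathcal{X}$, $(\mathcal{N}*_N\mathcal{X}*_N\mathcal{A})^H=\mathcal{N}*_N\mathcal{X}*_N\mathcal{A}$;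 $\tilde{\mathcal{A}}^{\dagger}$ is the Moore-Penrose inverse (identity weights). *)

theory Defs
  imports Complex_Main
begin

text \<open>Multi-indices (i_1,...,i_N) with 0 <= i_k < I_k, encoded as functions nat => nat
  that vanish from position N on.\<close>
definition idx :: "(nat \<Rightarrow> nat) \<Rightarrow> nat \<Rightarrow> (nat \<Rightarrow> nat) set" where
  "idx I N = {f. (\<forall>k<N. f k < I k) \<and> (\<forall>k\<ge>N. f k = 0)}"

type_synonym mindex = "nat \<Rightarrow> nat"
type_synonym tensor = "mindex \<Rightarrow> mindex \<Rightarrow> complex"
type_synonym vtensor = "mindex \<Rightarrow> complex"

text \<open>In all definitions, D is the multi-index set I_1 x ... x I_N; entries outside D are 0.\<close>
definition is_tensor :: "mindex set \<Rightarrow> tensor \<Rightarrow> bool" where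
  "is_tensor D A \<longleftrightarrow> (\<forall>i j. (i \<notin> D \<or> j \<notin> D) \<longrightarrow> A i j = 0)"

definition is_vtensor :: "mindex set \<Rightarrow> vtensor \<Rightarrow> bool" where
  "is_vtensor D X \<longleftrightarrow> (\<forall>i. i \<notin> D \<longrightarrow> X i = 0)"

definition zero_tensor :: tensor where "zero_tensor = (\<lambda>i j. 0)"

definition id_tensor :: "mindex set \<Rightarrow> tensor" where
  "id_tensor D = (\<lambda>i j. if i \<in> D \<and> j \<in> D \<and> i = j then 1 else 0)"

definition ein :: "mindex set \<Rightarrow> tensor \<Rightarrow> tensor \<Rightarrow> tensor" where
  "ein D A B = (\<lambda>i j. if i \<in> D \<and> j \<in> D then (\<Sum>k\<in>D. A i k * B k j) else 0)"

definition einv :: "mindex set \<Rightarrow> tensor \<Rightarrow> vtensor \<Rightarrow> vtensor" where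
  "einv D A X = (\<lambda>i. if i \<in> D then (\<Sum>k\<in>D. A i k * X k) else 0)"

definition ctrans :: "tensor \<Rightarrow> tensor" where
  "ctrans A = (\<lambda>i j. cnj (A j i))"

definition tinner :: "mindex set \<Rightarrow> vtensor \<Rightarrow> vtensor \<Rightarrow> complex" where
  "tinner D X Y = (\<Sum>i\<in>D. cnj (Y i) * X i)"

definition tnorm :: "mindex set \<Rightarrow> vtensor \<Rightarrow> real" where
  "tnorm D X = sqrt (Re (tinner D X X))"

definition hpd :: "mindex set \<Rightarrow> tensor \<Rightarrow> bool" where
  "hpd D M \<longleftrightarrow> is_tensor D M \<and> ctrans M = M \<and>
     (\<forall>X. is_vtensor D X \<and> X \<noteq> (\<lambda>i. 0) \<longrightarrow>
        tinner D (einv D M X) X \<in> \<real> \<and> 0 < Re (tinner D (einv D M X) X))"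

definition tinv :: "mindex set \<Rightarrow> tensor \<Rightarrow> tensor" where
  "tinv D A = (THE B. is_tensor D B \<and> ein D A B = id_tensor D \<and> ein D B A = id_tensor D)"

definition tsqrt :: "mindex set \<Rightarrow> tensor \<Rightarrow> tensor" where
  "tsqrt D M = (THE S. hpd D S \<and> ein D S S = M)"

definition wnorm :: "mindex set \<Rightarrow> tensor \<Rightarrow> vtensor \<Rightarrow> real" where
  "wnorm D M X = sqrt (Re (tinner D (einv D M X) X))"

definition wopnorm :: "mindex set \<Rightarrow> tensor \<Rightarrow> tensor \<Rightarrow> tensor \<Rightarrow> real" where
  "wopnorm D M N A = Sup {wnorm D M (einv D A X) | X. is_vtensor D X \<and> wnorm D N X = 1}"

definition numrad :: "mindex set \<Rightarrow> tensor \<Rightarrow> real" where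
  "numrad D A = Sup {cmod (tinner D (einv D A X) X) | X. is_vtensor D X \<and> tnorm D X = 1}"

definition wmp :: "mindex set \<Rightarrow> tensor \<Rightarrow> tensor \<Rightarrow> tensor \<Rightarrow> tensor" where
  "wmp D M N A = (THE X. is_tensor D X \<and>
      ein D (ein D A X) A = A \<and> ein D (ein D X A) X = X \<and>
      ctrans (ein D M (ein D A X)) = ein D M (ein D A X) \<and>
      ctrans (ein D N (ein D X A)) = ein D N (ein D X A))"

definition mpinv :: "mindex set \<Rightarrow> tensor \<Rightarrow> tensor" where
  "mpinv D A = wmp D (id_tensor D) (id_tensor D) A"

end

theory Submission
  imports Defs "Jordan_Normal_Form.Jordan_Normal_Form"
    "HOL-Computational_Algebra.Fundamental_Theorem_Algebra"
begin

text \<open>Write B for M^(1/2) A N^(-1/2). Conjugating by the Hermitian square roots of the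
  weights turns the weighted norms into Euclidean ones: the weighted norm of A is the operator
  norm of B, and since the weighted Moore-Penrose inverse of A is N^(-1/2) B^+ M^(1/2), the
  weighted norm of the latter is the operator norm of B^+. For the lower bound pick y \<noteq> 0 in
  the range of B: then y = B B^+ y, so |y| \<le> |B| |B^+| |y|. For the upper bound, polarization
  gives |C| \<le> 2 w(C) for every C. The square roots and the Moore-Penrose inverse exist by the
  spectral theorem for Hermitian tensors, proved by deflation with Householder reflections.\<close>

lemma is_tensor_ein [simp]: "is_tensor D (ein D A B)"
  by (simp add: is_tensor_def ein_def)

lemma is_tensor_id_tensor [simp]: "is_tensor D (id_tensor D)"
  by (simp add: is_tensor_def id_tensor_def)

lemma is_tensor_ctrans [simp]: "is_tensor D (ctrans A) = is_tensor D A"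
  by (auto simp add: is_tensor_def ctrans_def)

lemma ctrans_ctrans [simp]: "ctrans (ctrans A) = A"
  by (simp add: ctrans_def)

lemma ctrans_id_tensor [simp]: "ctrans (id_tensor D) = id_tensor D"
  by (auto simp add: ctrans_def id_tensor_def fun_eq_iff)

lemma tensor_eqI:
  "is_tensor D A \<Longrightarrow> is_tensor D B \<Longrightarrow> (\<And>i j. i \<in> D \<Longrightarrow> j \<in> D \<Longrightarrow> A i j = B i j) \<Longrightarrow> A = B"
  unfolding is_tensor_def by (intro ext) metis

lemma ein_assoc: "ein D (ein D A B) C = ein D A (ein D B C)"
proof -
  have "(\<Sum>k\<in>D. (\<Sum>l\<in>D. A i l * B l k) * C k j) = (\<Sum>l\<in>D. A i l * (\<Sum>k\<in>D. B l k * C k j))" for i j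
    by (simp add: sum_distrib_left sum_distrib_right mult.assoc) (rule sum.swap)
  then show ?thesis by (auto simp: ein_def fun_eq_iff cong: sum.cong)
qed

lemma ctrans_ein: "ctrans (ein D A B) = ein D (ctrans B) (ctrans A)"
  by (auto simp: ctrans_def ein_def fun_eq_iff mult.commute)

lemma ein_id_left: "finite D \<Longrightarrow> is_tensor D A \<Longrightarrow> ein D (id_tensor D) A = A"
  unfolding ein_def id_tensor_def is_tensor_def
  by (intro ext) (auto simp: if_distrib[of "\<lambda>x. x * _"] cong: if_cong)

lemma ein_id_right: "finite D \<Longrightarrow> is_tensor D A \<Longrightarrow> ein D A (id_tensor D) = A"
  unfolding ein_def id_tensor_def is_tensor_def
  by (intro ext) (auto simp: if_distrib[of "\<lambda>x. _ * x"] cong: if_cong)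

lemma ein_inverse_unique:
  "finite D \<Longrightarrow> is_tensor D B1 \<Longrightarrow> is_tensor D B2 \<Longrightarrow> ein D B1 A = id_tensor D \<Longrightarrow>
    ein D A B2 = id_tensor D \<Longrightarrow> B1 = B2"
  by (metis ein_assoc ein_id_left ein_id_right)

lemma ein_cancel_left:
  "finite D \<Longrightarrow> ein D P Q = id_tensor D \<Longrightarrow> is_tensor D Z \<Longrightarrow> ein D P (ein D Q Z) = Z"
  by (simp add: ein_assoc[symmetric] ein_id_left)

lemma tinv_eqI:
  assumes "finite D" "is_tensor D B" "ein D A B = id_tensor D" "ein D B A = id_tensor D"
  shows "tinv D A = B"
  unfolding tinv_def
  by (rule the1_equality) (use assms ein_inverse_unique in metis)+

definition tadd :: "tensor \<Rightarrow> tensor \<Rightarrow> tensor" where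
  "tadd A B = (\<lambda>i j. A i j + B i j)"

lemma ein_tadd: "ein D A (tadd B C) = tadd (ein D A B) (ein D A C)"
  by (intro ext) (simp add: ein_def tadd_def distrib_left sum.distrib)

lemma is_vtensor_einv [simp]: "is_vtensor D (einv D A X)"
  by (simp add: is_vtensor_def einv_def)

lemma einv_ein: "einv D (ein D A B) X = einv D A (einv D B X)"
proof -
  have "(\<Sum>k\<in>D. (\<Sum>l\<in>D. A i l * B l k) * X k) = (\<Sum>l\<in>D. A i l * (\<Sum>k\<in>D. B l k * X k))" for i
    by (simp add: sum_distrib_left sum_distrib_right mult.assoc) (rule sum.swap)
  then show ?thesis by (auto simp: einv_def ein_def fun_eq_iff cong: sum.cong)
qed

lemma einv_id: "finite D \<Longrightarrow> is_vtensor D X \<Longrightarrow> einv D (id_tensor D) X = X"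
  unfolding einv_def id_tensor_def is_vtensor_def
  by (intro ext) (auto simp: if_distrib[of "\<lambda>x. x * _"] cong: if_cong)

lemma einv_cancel:
  "finite D \<Longrightarrow> ein D P Q = id_tensor D \<Longrightarrow> is_vtensor D Y \<Longrightarrow> einv D P (einv D Q Y) = Y"
  by (metis einv_ein einv_id)

lemma einv_zero [simp]: "einv D A (\<lambda>i. 0) = (\<lambda>i. 0)"
  by (intro ext) (simp add: einv_def)

lemma einv_scale: "einv D A (\<lambda>i. c * x i) = (\<lambda>i. c * einv D A x i)"
  by (auto simp: einv_def sum_distrib_left mult_ac)

lemma einv_add_scale: "einv D A (\<lambda>i. x i + c * y i) = (\<lambda>i. einv D A x i + c * einv D A y i)"
  by (intro ext) (simp add: einv_def distrib_left sum.distrib sum_distrib_left mult_ac)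

lemma tinner_einv_adjoint: "tinner D (einv D A X) Y = tinner D X (einv D (ctrans A) Y)"
proof -
  have "(\<Sum>i\<in>D. cnj (Y i) * (\<Sum>k\<in>D. A i k * X k)) = (\<Sum>k\<in>D. cnj (\<Sum>i\<in>D. cnj (A i k) * Y i) * X k)"
    by (simp add: sum_distrib_left sum_distrib_right mult_ac) (rule sum.swap)
  then show ?thesis by (simp add: tinner_def einv_def ctrans_def)
qed

lemma tinner_scale_left: "tinner D (\<lambda>i. c * x i) y = c * tinner D x y"
  by (simp add: tinner_def sum_distrib_left mult_ac)

lemma tinner_scale_right: "tinner D x (\<lambda>i. c * y i) = cnj c * tinner D x y"
  by (simp add: tinner_def sum_distrib_left mult_ac)

lemma tinner_add_scale: "tinner D (\<lambda>i. u i + c * v i) (\<lambda>i. x i + c * y i) =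
    tinner D u x + cnj c * tinner D u y + c * tinner D v x + c * cnj c * tinner D v y"
  by (simp add: tinner_def algebra_simps sum.distrib sum_distrib_left)

lemma tinner_self: "tinner D X X = of_real (\<Sum>i\<in>D. (cmod (X i))\<^sup>2)"
  by (simp add: tinner_def complex_norm_square mult.commute del: of_real_power)

lemma tinner_self_of_Re: "tinner D X X = of_real (Re (tinner D X X))"
  by (simp add: tinner_self)

lemma Re_tinner_self: "Re (tinner D X X) = (\<Sum>i\<in>D. (cmod (X i))\<^sup>2)"
  by (simp add: tinner_self)

lemma Re_tinner_self_nonneg: "0 \<le> Re (tinner D X X)"
  unfolding Re_tinner_self by (rule sum_nonneg) simp

lemma Re_tinner_self_eq_0_iff:
  "finite D \<Longrightarrow> is_vtensor D X \<Longrightarrow> Re (tinner D X X) = 0 \<longleftrightarrow> X = (\<lambda>i. 0)"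
  by (auto simp: Re_tinner_self sum_nonneg_eq_0_iff is_vtensor_def fun_eq_iff)

lemma tnorm_power2: "(tnorm D X)\<^sup>2 = Re (tinner D X X)"
  by (simp add: tnorm_def real_sqrt_pow2[OF Re_tinner_self_nonneg])

lemma tnorm_nonneg: "0 \<le> tnorm D X"
  by (simp add: tnorm_def Re_tinner_self_nonneg)

lemma tnorm_eq_0_iff: "finite D \<Longrightarrow> is_vtensor D Y \<Longrightarrow> tnorm D Y = 0 \<longleftrightarrow> Y = (\<lambda>i. 0)"
  using Re_tinner_self_eq_0_iff[of D Y] Re_tinner_self_nonneg[of D Y] by (simp add: tnorm_def)

lemma tnorm_scale: "tnorm D (\<lambda>i. c * Y i) = cmod c * tnorm D Y"
proof -
  have "tinner D (\<lambda>i. c * Y i) (\<lambda>i. c * Y i) = c * cnj c * tinner D Y Y"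
    unfolding tinner_scale_left tinner_scale_right by (simp add: mult_ac)
  also have "c * cnj c = of_real ((cmod c)\<^sup>2)" by (metis complex_norm_square)
  finally have "Re (tinner D (\<lambda>i. c * Y i) (\<lambda>i. c * Y i)) = (cmod c)\<^sup>2 * Re (tinner D Y Y)"
    by (simp del: of_real_power)
  thus ?thesis by (simp add: tnorm_def real_sqrt_mult)
qed

lemma tnorm_normalize:
  assumes "is_vtensor D X" "tnorm D X > 0"
  shows "is_vtensor D (\<lambda>i. of_real (1 / tnorm D X) * X i)"
    and "tnorm D (\<lambda>i. of_real (1 / tnorm D X) * X i) = 1"
   apply (use assms in \<open>simp add: is_vtensor_def\<close>)
  unfolding tnorm_scale using assms by (simp add: norm_divide)

definition delta :: "mindex \<Rightarrow> vtensor" where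
  "delta d = (\<lambda>k. if k = d then 1 else 0)"

lemma einv_delta: "finite D \<Longrightarrow> d \<in> D \<Longrightarrow> einv D A (delta d) = (\<lambda>i. if i \<in> D then A i d else 0)"
  by (auto simp: einv_def delta_def if_distrib[of "\<lambda>x. _ * x"] cong: if_cong)

lemma is_vtensor_delta: "d \<in> D \<Longrightarrow> is_vtensor D (delta d)"
  by (auto simp: is_vtensor_def delta_def)

lemma tnorm_delta: "finite D \<Longrightarrow> d \<in> D \<Longrightarrow> tnorm D (delta d) = 1"
  by (auto simp: delta_def tnorm_def tinner_def if_distrib[of cnj] if_distrib[of "\<lambda>x. x * _"]
      cong: if_cong)

lemma gram_eq_zero_imp_zero:
  assumes fin: "finite D" and tB: "is_tensor D B" and z: "ein D (ctrans B) B = (\<lambda>i j. 0)"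
  shows "B = (\<lambda>i j. 0)"
proof (rule tensor_eqI[OF tB])
  show "is_tensor D (\<lambda>i j. 0)" by (simp add: is_tensor_def)
  fix i j assume i: "i \<in> D" and j: "j \<in> D"
  have "tinner D (\<lambda>k. B k j) (\<lambda>k. B k j) = 0"
    using fun_cong[OF fun_cong[OF z, of j], of j] j by (simp add: ein_def ctrans_def tinner_def)
  hence "\<forall>k\<in>D. (cmod (B k j))\<^sup>2 = 0"
    using fin Re_tinner_self[of D "\<lambda>k. B k j"] by (simp add: sum_nonneg_eq_0_iff)
  thus "B i j = 0" using i by simp
qed

section \<open>Unitary tensors and Householder reflections\<close>

definition tunitary :: "mindex set \<Rightarrow> tensor \<Rightarrow> bool" where
  "tunitary D U \<longleftrightarrow> is_tensor D U \<and> ein D (ctrans U) U = id_tensor D \<and> ein D U (ctrans U) = id_tensor D"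

lemma tunitary_id_tensor: "finite D \<Longrightarrow> tunitary D (id_tensor D)"
  by (simp add: tunitary_def ein_id_left)

lemma tunitary_ein:
  assumes fin: "finite D" and W: "tunitary D W" and V: "tunitary D V"
  shows "tunitary D (ein D W V)"
proof -
  have "ein D (ctrans (ein D W V)) (ein D W V) = ein D (ctrans V) (ein D (ein D (ctrans W) W) V)"
    by (simp add: ctrans_ein ein_assoc)
  hence 1: "ein D (ctrans (ein D W V)) (ein D W V) = id_tensor D"
    using W V fin by (simp add: tunitary_def ein_id_left)
  have "ein D (ein D W V) (ctrans (ein D W V)) = ein D W (ein D (ein D V (ctrans V)) (ctrans W))"
    by (simp add: ctrans_ein ein_assoc)
  hence 2: "ein D (ein D W V) (ctrans (ein D W V)) = id_tensor D"
    using W V fin by (simp add: tunitary_def ein_id_left)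
  show ?thesis using 1 2 by (simp add: tunitary_def)
qed

lemma tunitary_orthonormal:
  assumes U: "tunitary D U" and i: "i \<in> D" and j: "j \<in> D"
  shows "(\<Sum>k\<in>D. cnj (U k i) * U k j) = (if i = j then 1 else 0)"
    and "(\<Sum>k\<in>D. U i k * cnj (U j k)) = (if i = j then 1 else 0)"
proof -
  have "ein D (ctrans U) U i j = id_tensor D i j" "ein D U (ctrans U) i j = id_tensor D i j"
    using U by (simp_all add: tunitary_def)
  thus "(\<Sum>k\<in>D. cnj (U k i) * U k j) = (if i = j then 1 else 0)"
    and "(\<Sum>k\<in>D. U i k * cnj (U j k)) = (if i = j then 1 else 0)"
    using i j by (simp_all add: ein_def ctrans_def id_tensor_def)
qed

definition householder :: "mindex set \<Rightarrow> vtensor \<Rightarrow> tensor" where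
  "householder D u = (\<lambda>i j. if i \<in> D \<and> j \<in> D
     then delta i j - of_real (2 / Re (tinner D u u)) * u i * cnj (u j) else 0)"

lemma tunitary_householder:
  assumes fin: "finite D" and s0: "Re (tinner D u u) \<noteq> 0"
  shows "tunitary D (householder D u)"
proof -
  define s where "s = Re (tinner D u u)"
  define b where "b = complex_of_real (2 / s)"
  have W: "householder D u = (\<lambda>i j. if i \<in> D \<and> j \<in> D then delta i j - b * u i * cnj (u j) else 0)"
    by (simp only: householder_def b_def s_def)
  have suu: "(\<Sum>k\<in>D. cnj (u k) * u k) = of_real s"
    using tinner_self_of_Re[of D u] by (simp add: s_def tinner_def)
  have herm: "ctrans (householder D u) = householder D u"
    unfolding W by (intro ext) (auto simp: ctrans_def b_def delta_def)
  have "ein D (householder D u) (householder D u) = id_tensor D"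
  proof (rule tensor_eqI[OF is_tensor_ein is_tensor_id_tensor])
    fix i j assume i: "i \<in> D" and j: "j \<in> D"
    have "ein D (householder D u) (householder D u) i j
        = (\<Sum>k\<in>D. (delta i k - b * u i * cnj (u k)) * (delta k j - b * u k * cnj (u j)))"
      using i j by (simp add: ein_def W)
    also have "\<dots> = (\<Sum>k\<in>D. delta i k * delta k j) - (\<Sum>k\<in>D. delta i k * (b * u k * cnj (u j)))
        - (\<Sum>k\<in>D. (b * u i * cnj (u k)) * delta k j) + b * b * u i * cnj (u j) * (\<Sum>k\<in>D. cnj (u k) * u k)"
      by (simp add: algebra_simps sum.distrib sum_subtractf sum_distrib_left)
    also have "\<dots> = delta i j - b * u i * cnj (u j) - b * u i * cnj (u j) + b * b * u i * cnj (u j) * of_real s"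
      using fin i j unfolding suu
      by (simp add: delta_def if_distrib[of "\<lambda>x. x * _"] if_distrib[of "\<lambda>x. _ * x"] cong: if_cong)
    also have "\<dots> = delta i j"
      using s0 by (simp add: b_def s_def field_simps)
    finally show "ein D (householder D u) (householder D u) i j = id_tensor D i j"
      using i j by (simp add: id_tensor_def delta_def)
  qed
  thus ?thesis using herm by (simp add: tunitary_def is_tensor_def householder_def)
qed

text \<open>The reflection in \<open>delta d - x\<close> swaps \<open>delta d\<close> and a unit vector \<open>x\<close>, provided
  \<open>x d\<close> is real; the phase of \<open>x\<close> is normalised first to achieve this.\<close>

lemma householder_column:
  assumes fin: "finite D" and d: "d \<in> D" and xx: "tinner D x x = 1"
    and xd: "x d = of_real (cmod (x d))" and s0: "Re (tinner D u u) \<noteq> 0"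
    and u: "u = (\<lambda>i. delta d i - x i)"
  shows "householder D u i d = (if i \<in> D then x i else 0)"
proof -
  define a where "a = cmod (x d)"
  have "tinner D u u = (\<Sum>k\<in>D. cnj (delta d k) * delta d k) - (\<Sum>k\<in>D. cnj (delta d k) * x k)
      - (\<Sum>k\<in>D. cnj (x k) * delta d k) + tinner D x x"
    by (simp add: tinner_def u algebra_simps sum.distrib sum_subtractf)
  also have "\<dots> = 1 - x d - cnj (x d) + 1"
    using fin d xx by (simp add: delta_def if_distrib[of cnj] if_distrib[of "\<lambda>x. x * _"]
        if_distrib[of "\<lambda>x. _ * x"] cong: if_cong)
  finally have s: "Re (tinner D u u) = 2 - 2 * a" using xd by (simp add: a_def complex_eq_iff)
  define b where "b = complex_of_real (2 / Re (tinner D u u))"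
  have "cnj (u d) = of_real (1 - a)" using xd by (simp add: u delta_def a_def complex_eq_iff)
  hence "b * cnj (u d) = of_real (2 / (2 - 2 * a) * (1 - a))" unfolding b_def s by simp
  also have "\<dots> = 1" using s0 unfolding s by (simp add: field_simps)
  finally have key: "b * cnj (u d) = 1" .
  have "householder D u i d = (if i \<in> D then delta i d - u i * (b * cnj (u d)) else 0)"
    using d by (simp only: householder_def b_def) (simp add: ac_simps)
  also have "\<dots> = (if i \<in> D then delta i d - u i else 0)" by (simp only: key mult_1_right)
  finally show ?thesis by (simp add: u delta_def)
qed

lemma tunitary_with_column:
  assumes fin: "finite D" and d: "d \<in> D" and vx: "is_vtensor D x" and xx: "tinner D x x = 1"
  shows "\<exists>W c. tunitary D W \<and> (\<forall>i. W i d = c * x i)"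
proof -
  define a where "a = x d"
  define c where "c = (if a = 0 then 1 else cnj a / of_real (cmod a))"
  define x' where "x' = (\<lambda>i. c * x i)"
  have cnj_a: "cnj a * a = of_real ((cmod a)\<^sup>2)" by (metis complex_norm_square mult.commute)
  have "c * cnj c = 1"
    using cnj_a by (cases "a = 0") (simp_all add: c_def power2_eq_square field_simps)
  hence xx': "tinner D x' x' = 1" unfolding x'_def tinner_scale_left tinner_scale_right xx by simp
  have x'd: "x' d = of_real (cmod (x' d))"
    using cnj_a by (cases "a = 0") (simp_all add: x'_def c_def a_def[symmetric] norm_divide
        norm_mult power2_eq_square field_simps)
  define u where "u = (\<lambda>i. delta d i - x' i)"
  show ?thesis
  proof (cases "Re (tinner D u u) = 0")
    case True
    have "is_vtensor D u" using vx d by (auto simp: is_vtensor_def u_def x'_def delta_def)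
    hence u0: "u = (\<lambda>i. 0)" using Re_tinner_self_eq_0_iff[OF fin] True by blast
    have dx: "delta d i = c * x i" for i using fun_cong[OF u0, of i] by (simp add: u_def x'_def)
    have "id_tensor D i d = c * x i" for i
      unfolding dx[symmetric] using d by (simp add: id_tensor_def delta_def)
    thus ?thesis using tunitary_id_tensor[OF fin] by blast
  next
    case False
    have "householder D u i d = c * x i" for i
      using householder_column[OF fin d xx' x'd False u_def] vx by (simp add: x'_def is_vtensor_def)
    thus ?thesis using tunitary_householder[OF fin False] by blast
  qed
qed

section \<open>The spectral theorem\<close>

lemma complex_mat_ex_eigenvalue:
  fixes A :: "complex mat"
  assumes A: "A \<in> carrier_mat n n" and n: "n > 0"
  shows "\<exists>e. eigenvalue A e"
proof -
  have "degree (char_poly A) = n" using degree_monic_char_poly[OF A] by simp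
  hence "\<not> constant (poly (char_poly A))" using n by (simp add: constant_degree)
  then obtain e where "poly (char_poly A) e = 0" using fundamental_theorem_of_algebra by blast
  thus ?thesis using eigenvalue_root_char_poly[OF A] by blast
qed

lemma ex_eigenvector:
  assumes fin: "finite D" and ne: "D \<noteq> {}"
  shows "\<exists>e x. is_vtensor D x \<and> x \<noteq> (\<lambda>i. 0) \<and> einv D H x = (\<lambda>i. e * x i)"
proof -
  define n where "n = card D"
  obtain h where h: "bij_betw h {0..<n} D" using ex_bij_betw_nat_finite[OF fin] n_def by blast
  define A :: "complex mat" where "A = mat n n (\<lambda>(i,j). H (h i) (h j))"
  have A: "A \<in> carrier_mat n n" by (simp add: A_def)
  obtain e where "eigenvalue A e"
    using complex_mat_ex_eigenvalue[OF A] fin ne by (auto simp: n_def card_gt_0_iff)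
  then obtain v where v: "v \<in> carrier_vec n" "v \<noteq> 0\<^sub>v n" "A *\<^sub>v v = e \<cdot>\<^sub>v v"
    unfolding eigenvalue_def eigenvector_def using A by auto
  define g where "g = inv_into {0..<n} h"
  have g: "\<And>m. m \<in> D \<Longrightarrow> g m < n \<and> h (g m) = m"
    using h unfolding g_def by (metis atLeastLessThan_iff bij_betw_def bij_betw_inv_into_right inv_into_into)
  have gh: "\<And>j. j < n \<Longrightarrow> g (h j) = j"
    using h unfolding g_def by (simp add: bij_betw_inv_into_left)
  define x where "x = (\<lambda>m. if m \<in> D then v $ (g m) else 0)"
  have "is_vtensor D x" by (simp add: is_vtensor_def x_def)
  moreover have "x \<noteq> (\<lambda>i. 0)"
  proof -
    obtain j where j: "j < n" "v $ j \<noteq> 0" using v(1,2) by (metis carrier_vecD eq_vecI index_zero_vec(1,2))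
    have "h j \<in> D" using h j(1) by (auto simp: bij_betw_def)
    hence "x (h j) \<noteq> 0" using j gh by (simp add: x_def)
    thus ?thesis by auto
  qed
  moreover have "einv D H x m = e * x m" for m
  proof (cases "m \<in> D")
    case False thus ?thesis by (simp add: einv_def x_def)
  next
    case True
    have "einv D H x m = (\<Sum>k\<in>D. H m k * x k)" using True by (simp add: einv_def)
    also have "\<dots> = (\<Sum>j\<in>{0..<n}. H m (h j) * x (h j))"
      by (rule sum.reindex_bij_betw[OF h, symmetric])
    also have "\<dots> = (\<Sum>j\<in>{0..<n}. A $$ (g m, j) * v $ j)"
      using g[OF True] gh h by (intro sum.cong) (auto simp: A_def x_def bij_betw_def)
    also have "\<dots> = (A *\<^sub>v v) $ (g m)"
      using g[OF True] v(1) A by (simp add: mult_mat_vec_def scalar_prod_def row_def)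
    also have "\<dots> = e * x m" using v(3) g[OF True] v(1) True by (simp add: x_def)
    finally show ?thesis .
  qed
  ultimately show ?thesis by blast
qed

lemma hermitian_ex_unit_eigenvector:
  assumes fin: "finite D" and ne: "D \<noteq> {}" and herm: "ctrans H = H"
  shows "\<exists>e x. is_vtensor D x \<and> tinner D x x = 1 \<and> einv D H x = (\<lambda>i. of_real e * x i)"
proof -
  obtain e x0 where x0: "is_vtensor D x0" "x0 \<noteq> (\<lambda>i. 0)" "einv D H x0 = (\<lambda>i. e * x0 i)"
    using ex_eigenvector[OF fin ne] by blast
  have t: "tnorm D x0 > 0" using tnorm_eq_0_iff[OF fin x0(1)] tnorm_nonneg[of D x0] x0(2) by linarith
  define x where "x = (\<lambda>i. of_real (1 / tnorm D x0) * x0 i)"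
  have vx: "is_vtensor D x" and "tnorm D x = 1" using tnorm_normalize[OF x0(1) t] by (simp_all add: x_def)
  hence xx: "tinner D x x = 1" using tinner_self_of_Re[of D x] tnorm_power2[of D x] by simp
  have ex: "einv D H x = (\<lambda>i. e * x i)" unfolding x_def einv_scale x0(3) by (simp add: mult_ac)
  have "e = tinner D (einv D H x) x" unfolding ex tinner_scale_left xx by simp
  also have "\<dots> = tinner D x (einv D H x)" using tinner_einv_adjoint[of D H x x] herm by simp
  also have "\<dots> = cnj e" unfolding ex tinner_scale_right xx by simp
  finally have "e \<in> \<real>" by (simp add: Reals_cnj_iff)
  then obtain r where "e = of_real r" by (auto elim: Reals_cases)
  hence "einv D H x = (\<lambda>i. of_real r * x i)" using ex by simp
  thus ?thesis using vx xx by blast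
qed

definition tdiag :: "mindex set \<Rightarrow> (mindex \<Rightarrow> real) \<Rightarrow> tensor" where
  "tdiag D l = (\<lambda>i j. if i \<in> D \<and> i = j then complex_of_real (l i) else 0)"

definition unitary_diag :: "mindex set \<Rightarrow> tensor \<Rightarrow> (mindex \<Rightarrow> real) \<Rightarrow> tensor" where
  "unitary_diag D U l = ein D (ein D U (tdiag D l)) (ctrans U)"

lemma is_tensor_unitary_diag [simp]: "is_tensor D (unitary_diag D U l)"
  by (simp add: unitary_diag_def)

lemma unitary_diag_entry:
  assumes "finite D"
  shows "unitary_diag D U l i j =
    (if i \<in> D \<and> j \<in> D then (\<Sum>k\<in>D. U i k * of_real (l k) * cnj (U j k)) else 0)"
proof -
  have "(\<Sum>k\<in>D. (\<Sum>m\<in>D. U i m * (if m \<in> D \<and> m = k then complex_of_real (l m) else 0)) * cnj (U j k))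
      = (\<Sum>k\<in>D. U i k * of_real (l k) * cnj (U j k))"
    using assms by (intro sum.cong refl) (simp add: if_distrib[of "\<lambda>x. _ * x"] cong: if_cong)
  thus ?thesis by (simp add: unitary_diag_def ein_def tdiag_def ctrans_def)
qed

definition extend_by_one :: "mindex \<Rightarrow> tensor \<Rightarrow> tensor" where
  "extend_by_one d U = (\<lambda>i j. if i = d \<or> j = d then (if i = j then 1 else 0) else U i j)"

lemma tunitary_extend_by_one:
  assumes fin: "finite F" and d: "d \<notin> F" and U: "tunitary F U"
  shows "tunitary (insert d F) (extend_by_one d U)"
proof -
  have tU: "is_tensor F U" using U by (simp add: tunitary_def)
  have sum_insert: "(\<Sum>k\<in>insert d F. f k) = f d + (\<Sum>k\<in>F. f k)" for f :: "mindex \<Rightarrow> complex"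
    using fin d by simp
  have neq: "\<And>k. k \<in> F \<Longrightarrow> (k = d) = False" "\<And>k. k \<in> F \<Longrightarrow> (d = k) = False" using d by auto
  let ?E = "extend_by_one d U"
  have "is_tensor (insert d F) ?E" using tU by (auto simp: is_tensor_def extend_by_one_def)
  moreover have "ein (insert d F) (ctrans ?E) ?E = id_tensor (insert d F)"
  proof (rule tensor_eqI[OF is_tensor_ein is_tensor_id_tensor])
    fix i j assume "i \<in> insert d F" "j \<in> insert d F"
    then show "ein (insert d F) (ctrans ?E) ?E i j = id_tensor (insert d F) i j"
      using tunitary_orthonormal(1)[OF U, of i j] d
      by (auto simp: ein_def ctrans_def sum_insert extend_by_one_def id_tensor_def neq cong: sum.cong)
  qed
  moreover have "ein (insert d F) ?E (ctrans ?E) = id_tensor (insert d F)"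
  proof (rule tensor_eqI[OF is_tensor_ein is_tensor_id_tensor])
    fix i j assume "i \<in> insert d F" "j \<in> insert d F"
    then show "ein (insert d F) ?E (ctrans ?E) i j = id_tensor (insert d F) i j"
      using tunitary_orthonormal(2)[OF U, of i j] d
      by (auto simp: ein_def ctrans_def sum_insert extend_by_one_def id_tensor_def neq cong: sum.cong)
  qed
  ultimately show ?thesis by (simp add: tunitary_def)
qed

lemma unitary_diag_extend_by_one:
  assumes fin: "finite F" and d: "d \<notin> F" and i: "i \<in> insert d F" and j: "j \<in> insert d F"
  shows "unitary_diag (insert d F) (extend_by_one d U) (l(d := e)) i j =
    (if i = d \<or> j = d then (if i = j then of_real e else 0) else unitary_diag F U l i j)"
proof -
  have neq: "\<And>k. k \<in> F \<Longrightarrow> (k = d) = False" "\<And>k. k \<in> F \<Longrightarrow> (d = k) = False" using d by auto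
  show ?thesis
    using fin d i j by (auto simp: unitary_diag_entry extend_by_one_def neq cong: sum.cong)
qed

definition restrict_tensor :: "mindex set \<Rightarrow> tensor \<Rightarrow> tensor" where
  "restrict_tensor F K = (\<lambda>i j. if i \<in> F \<and> j \<in> F then K i j else 0)"

lemma is_tensor_restrict_tensor: "is_tensor F (restrict_tensor F K)"
  by (simp add: is_tensor_def restrict_tensor_def)

lemma ctrans_restrict_tensor: "ctrans (restrict_tensor F K) = restrict_tensor F (ctrans K)"
  by (auto simp: ctrans_def restrict_tensor_def fun_eq_iff)

lemma unitary_diag_deflation:
  assumes fin: "finite F" and d: "d \<notin> F" and tK: "is_tensor (insert d F) K"
    and col: "\<And>i. i \<in> insert d F \<Longrightarrow> K i d = of_real e * delta d i"
    and row: "\<And>i. i \<in> insert d F \<Longrightarrow> K d i = of_real e * delta d i"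
    and KF: "restrict_tensor F K = unitary_diag F U l"
  shows "K = unitary_diag (insert d F) (extend_by_one d U) (l(d := e))"
proof (rule tensor_eqI[OF tK is_tensor_unitary_diag])
  fix i j assume ij: "i \<in> insert d F" "j \<in> insert d F"
  have "unitary_diag (insert d F) (extend_by_one d U) (l(d := e)) i j
      = (if i = d \<or> j = d then (if i = j then of_real e else 0) else restrict_tensor F K i j)"
    unfolding KF using unitary_diag_extend_by_one[OF fin d ij] .
  also have "\<dots> = K i j" using col row ij by (auto simp: restrict_tensor_def delta_def)
  finally show "K i j = unitary_diag (insert d F) (extend_by_one d U) (l(d := e)) i j" by simp
qed

lemma ctrans_unitary_conj:
  "ctrans H = H \<Longrightarrow> ctrans (ein D (ein D (ctrans W) H) W) = ein D (ein D (ctrans W) H) W"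
  by (simp add: ctrans_ein ein_assoc)

lemma unitary_conj_eigen_column:
  assumes fin: "finite D" and d: "d \<in> D" and W: "tunitary D W" and herm: "ctrans H = H"
    and w: "einv D W (delta d) = w" and eig: "einv D H w = (\<lambda>i. of_real e * w i)" and i: "i \<in> D"
  defines "K \<equiv> ein D (ein D (ctrans W) H) W"
  shows "K i d = of_real e * delta d i" and "K d i = of_real e * delta d i"
proof -
  have "einv D K (delta d) = einv D (ctrans W) (einv D H w)"
    unfolding K_def einv_ein w ..
  also have "\<dots> = (\<lambda>i. of_real e * einv D (ctrans W) w i)" unfolding eig einv_scale ..
  also have "einv D (ctrans W) w = delta d"
    unfolding w[symmetric] using W einv_cancel[OF fin _ is_vtensor_delta[OF d]] by (simp add: tunitary_def)
  finally have "einv D K (delta d) i = of_real e * delta d i" by simp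
  thus col: "K i d = of_real e * delta d i" using i by (simp add: einv_delta[OF fin d])
  have "K d i = cnj (K i d)"
    using fun_cong[OF fun_cong[OF ctrans_unitary_conj[OF herm, of D W], of d], of i] by (simp add: K_def ctrans_def)
  thus "K d i = of_real e * delta d i" using col by (simp add: delta_def)
qed

lemma unitary_diag_conj:
  assumes fin: "finite D" and W: "tunitary D W" and tH: "is_tensor D H"
    and K: "ein D (ein D (ctrans W) H) W = unitary_diag D U l"
  shows "H = unitary_diag D (ein D W U) l"
proof -
  have "unitary_diag D (ein D W U) l = ein D W (ein D (ein D (ein D (ctrans W) H) W) (ctrans W))"
    unfolding K by (simp add: unitary_diag_def ctrans_ein ein_assoc)
  also have "\<dots> = ein D W (ein D (ctrans W) (ein D H (ein D W (ctrans W))))"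
    by (simp add: ein_assoc)
  also have "\<dots> = H" using W tH fin by (simp add: tunitary_def ein_id_right ein_cancel_left)
  finally show ?thesis by simp
qed

text \<open>Deflation: a unitary \<open>W\<close> whose column \<open>d\<close> is an eigenvector makes \<open>d\<close> an invariant
  coordinate of \<open>W\<^sup>H H W\<close>, and induction diagonalises the rest.\<close>

theorem hermitian_spectral_decomposition:
  assumes "finite D" and "is_tensor D H" and "ctrans H = H"
  shows "\<exists>U l. tunitary D U \<and> H = unitary_diag D U l"
  using assms
proof (induction D arbitrary: H rule: finite_induct)
  case empty
  have "H = unitary_diag {} (id_tensor {}) l" for l
    using empty by (auto simp: unitary_diag_def ein_def is_tensor_def)
  thus ?case using tunitary_id_tensor[of "{}"] by blast
next
  case (insert d F H)
  define D where "D = insert d F"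
  have fin: "finite D" and d: "d \<in> D" using insert(1) by (auto simp: D_def)
  obtain e x where x: "is_vtensor D x" "tinner D x x = 1" "einv D H x = (\<lambda>i. of_real e * x i)"
    using hermitian_ex_unit_eigenvector[OF fin _ insert(5)] d by blast
  obtain W c where W: "tunitary D W" "\<And>i. W i d = c * x i"
    using tunitary_with_column[OF fin d x(1,2)] by blast
  have Wd: "einv D W (delta d) = (\<lambda>i. c * x i)"
    using x(1) by (auto simp: einv_delta[OF fin d] W(2) is_vtensor_def)
  have eig: "einv D H (\<lambda>i. c * x i) = (\<lambda>i. of_real e * (c * x i))"
    unfolding einv_scale x(3) by (simp add: mult_ac)
  define K where "K = ein D (ein D (ctrans W) H) W"
  note K_d = unitary_conj_eigen_column[OF fin d W(1) insert(5) Wd eig, folded K_def]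
  have "ctrans (restrict_tensor F K) = restrict_tensor F K"
    unfolding ctrans_restrict_tensor K_def ctrans_unitary_conj[OF insert(5)] ..
  then obtain U' l' where U': "tunitary F U'" "restrict_tensor F K = unitary_diag F U' l'"
    using insert.IH is_tensor_restrict_tensor by blast
  have "K = unitary_diag D (extend_by_one d U') (l'(d := e))"
    unfolding D_def using K_d by (intro unitary_diag_deflation[OF insert(1,2) _ _ _ U'(2)])
      (simp_all add: K_def D_def)
  hence "H = unitary_diag D (ein D W (extend_by_one d U')) (l'(d := e))"
    using unitary_diag_conj[OF fin W(1) insert(4)[folded D_def]] by (simp add: K_def)
  moreover have "tunitary D (ein D W (extend_by_one d U'))"
    using tunitary_ein[OF fin W(1) tunitary_extend_by_one[OF insert(1,2) U'(1), folded D_def]] .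
  ultimately show ?case unfolding D_def by blast
qed

lemma ctrans_unitary_diag [simp]: "ctrans (unitary_diag D U l) = unitary_diag D U l"
proof -
  have "ctrans (tdiag D l) = tdiag D l" by (intro ext) (auto simp: ctrans_def tdiag_def)
  thus ?thesis by (simp add: unitary_diag_def ctrans_ein ein_assoc)
qed

lemma unitary_diag_cong:
  assumes "\<And>k. k \<in> D \<Longrightarrow> l1 k = l2 k"
  shows "unitary_diag D U l1 = unitary_diag D U l2"
proof -
  have "tdiag D l1 = tdiag D l2" using assms by (auto simp: tdiag_def fun_eq_iff)
  thus ?thesis by (simp add: unitary_diag_def)
qed

lemma unitary_diag_mult:
  assumes fin: "finite D" and U: "tunitary D U"
  shows "ein D (unitary_diag D U l1) (unitary_diag D U l2) = unitary_diag D U (\<lambda>k. l1 k * l2 k)"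
proof -
  have "ein D (ctrans U) (ein D U (ein D (tdiag D l2) (ctrans U))) = ein D (tdiag D l2) (ctrans U)"
    using U fin by (simp add: tunitary_def ein_cancel_left)
  moreover have "ein D (tdiag D l1) (ein D (tdiag D l2) Y) = ein D (tdiag D (\<lambda>k. l1 k * l2 k)) Y" for Y
    using fin by (intro ext)
      (auto simp: ein_def tdiag_def if_distrib[of "\<lambda>x. x * _"] mult.assoc cong: if_cong)
  ultimately show ?thesis unfolding unitary_diag_def ein_assoc by simp
qed

lemma unitary_diag_one: "finite D \<Longrightarrow> tunitary D U \<Longrightarrow> unitary_diag D U (\<lambda>_. 1) = id_tensor D"
proof -
  have "tdiag D (\<lambda>_. 1) = id_tensor D" by (intro ext) (auto simp: tdiag_def id_tensor_def)
  thus "finite D \<Longrightarrow> tunitary D U \<Longrightarrow> ?thesis"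
    by (simp add: unitary_diag_def tunitary_def ein_id_right)
qed

lemma unitary_diag_zero: "unitary_diag D U (\<lambda>_. 0) = (\<lambda>i j. 0)"
  by (intro ext) (simp add: unitary_diag_def ein_def tdiag_def if_distrib[of "\<lambda>x. _ * x"] cong: if_cong)

lemma unitary_diag_add:
  "finite D \<Longrightarrow> tadd (unitary_diag D U l1) (unitary_diag D U l2) = unitary_diag D U (\<lambda>k. l1 k + l2 k)"
  by (intro ext) (simp add: tadd_def unitary_diag_entry distrib_left distrib_right sum.distrib)

lemma tinner_unitary_diag:
  assumes fin: "finite D"
  shows "tinner D (einv D (unitary_diag D U l) x) x
    = of_real (\<Sum>k\<in>D. l k * (cmod (einv D (ctrans U) x k))\<^sup>2)"
proof -
  define y where "y = einv D (ctrans U) x"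
  have "tinner D (einv D (unitary_diag D U l) x) x = tinner D (einv D U (einv D (tdiag D l) y)) x"
    by (simp add: unitary_diag_def einv_ein y_def)
  also have "\<dots> = tinner D (einv D (tdiag D l) y) y" by (simp add: tinner_einv_adjoint y_def)
  also have "\<dots> = (\<Sum>k\<in>D. cnj (y k) * (of_real (l k) * y k))"
    using fin by (simp add: tinner_def einv_def tdiag_def if_distrib[of "\<lambda>x. x * _"] cong: if_cong)
  also have "\<dots> = (\<Sum>k\<in>D. of_real (l k * (cmod (y k))\<^sup>2))"
    by (intro sum.cong refl) (simp add: complex_norm_square mult_ac del: of_real_power)
  finally show ?thesis by (simp add: y_def)
qed

lemma hpd_unitary_diag_imp_pos:
  assumes fin: "finite D" and U: "tunitary D U" and h: "hpd D (unitary_diag D U l)" and k: "k \<in> D"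
  shows "l k > 0"
proof -
  define x where "x = einv D U (delta k)"
  have y: "einv D (ctrans U) x = delta k"
    unfolding x_def using U einv_cancel[OF fin _ is_vtensor_delta[OF k]] by (simp add: tunitary_def)
  have "x \<noteq> (\<lambda>i. 0)"
  proof
    assume "x = (\<lambda>i. 0)"
    thus False using fun_cong[OF y, of k] by (simp add: delta_def)
  qed
  hence "0 < Re (tinner D (einv D (unitary_diag D U l) x) x)" using h by (simp add: hpd_def x_def)
  also have "tinner D (einv D (unitary_diag D U l) x) x = of_real (l k)"
    unfolding tinner_unitary_diag[OF fin] y using fin k
    by (simp add: delta_def if_distrib[of cmod] if_distrib[of "\<lambda>x. x\<^sup>2"] if_distrib[of "\<lambda>x. _ * x"]
        cong: if_cong)
  finally show ?thesis by simp
qed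

lemma hpd_unitary_diagI:
  assumes fin: "finite D" and U: "tunitary D U" and pos: "\<And>k. k \<in> D \<Longrightarrow> l k > 0"
  shows "hpd D (unitary_diag D U l)"
proof -
  have "0 < Re (tinner D (einv D (unitary_diag D U l) x) x)"
    if x: "is_vtensor D x" "x \<noteq> (\<lambda>i. 0)" for x
  proof -
    define y where "y = einv D (ctrans U) x"
    have "einv D U y = x" unfolding y_def using U einv_cancel[OF fin _ x(1)] by (simp add: tunitary_def)
    hence "y \<noteq> (\<lambda>i. 0)" using x(2) by auto
    then obtain k where "y k \<noteq> 0" by auto
    hence k: "k \<in> D" by (auto simp: y_def einv_def split: if_splits)
    have "0 < (\<Sum>k\<in>D. l k * (cmod (y k))\<^sup>2)"
    proof (rule sum_pos2[OF fin k])
      show "0 < l k * (cmod (y k))\<^sup>2" using pos[OF k] \<open>y k \<noteq> 0\<close> by simp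
      show "\<And>i. i \<in> D \<Longrightarrow> 0 \<le> l i * (cmod (y i))\<^sup>2" using pos by (simp add: less_imp_le)
    qed
    thus ?thesis unfolding tinner_unitary_diag[OF fin] y_def[symmetric] by simp
  qed
  thus ?thesis by (simp add: hpd_def tinner_unitary_diag[OF fin])
qed

section \<open>Square roots and inverses of positive definite tensors\<close>

lemma hpd_unitary_diag_decomposition:
  assumes fin: "finite D" and h: "hpd D M"
  obtains U l where "tunitary D U" "\<And>k. k \<in> D \<Longrightarrow> l k > 0" "M = unitary_diag D U l"
proof -
  have "is_tensor D M" "ctrans M = M" using h by (simp_all add: hpd_def)
  then obtain U l where U: "tunitary D U" "M = unitary_diag D U l"
    using hermitian_spectral_decomposition[OF fin] by blast
  moreover have "\<And>k. k \<in> D \<Longrightarrow> l k > 0" using hpd_unitary_diag_imp_pos[OF fin U(1)] h U(2) by blast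
  ultimately show thesis using that by blast
qed

lemma hpd_quadratic_nonneg: "is_vtensor D x \<Longrightarrow> hpd D S \<Longrightarrow> 0 \<le> Re (tinner D (einv D S x) x)"
  by (cases "x = (\<lambda>i. 0)") (auto simp: hpd_def tinner_def less_imp_le)

lemma sum_tinner_columns:
  fixes D :: "mindex set" and X S :: tensor
  defines "c \<equiv> \<lambda>j l. if l \<in> D then X l j else 0"
  assumes herm: "\<And>i j. cnj (X i j) = X j i"
  shows "(\<Sum>j\<in>D. tinner D (einv D S (c j)) (c j)) = (\<Sum>j\<in>D. \<Sum>l\<in>D. X j l * (\<Sum>k\<in>D. S l k * X k j))"
    and "(\<Sum>j\<in>D. tinner D (einv D S (c j)) (c j)) = (\<Sum>j\<in>D. \<Sum>l\<in>D. X j l * (\<Sum>k\<in>D. X l k * S k j))"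
proof -
  show "(\<Sum>j\<in>D. tinner D (einv D S (c j)) (c j)) = (\<Sum>j\<in>D. \<Sum>l\<in>D. X j l * (\<Sum>k\<in>D. S l k * X k j))"
    by (simp add: tinner_def einv_def c_def herm cong: sum.cong)
  also have "\<dots> = (\<Sum>j\<in>D. \<Sum>l\<in>D. \<Sum>k\<in>D. X j l * S l k * X k j)"
    by (simp add: sum_distrib_left mult.assoc)
  also have "\<dots> = (\<Sum>j\<in>D. \<Sum>k\<in>D. \<Sum>l\<in>D. X j l * S l k * X k j)"
    by (intro sum.cong refl sum.swap)
  also have "\<dots> = (\<Sum>k\<in>D. \<Sum>j\<in>D. \<Sum>l\<in>D. X j l * S l k * X k j)"
    by (rule sum.swap)
  also have "\<dots> = (\<Sum>j\<in>D. \<Sum>l\<in>D. X j l * (\<Sum>k\<in>D. X l k * S k j))"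
    by (simp add: sum_distrib_left mult_ac)
  finally show "(\<Sum>j\<in>D. tinner D (einv D S (c j)) (c j)) = (\<Sum>j\<in>D. \<Sum>l\<in>D. X j l * (\<Sum>k\<in>D. X l k * S k j))" .
qed

text \<open>For \<open>X = S1 - S2\<close> we have \<open>S1 X + X S2 = S1\<^sup>2 - S2\<^sup>2 = 0\<close>, hence
  \<open>tr (X S1 X) + tr (X S2 X) = tr (X (S1 X + X S2)) = 0\<close>; both traces are sums of nonnegative
  quadratic forms over the columns of \<open>X\<close>, and the first one is definite.\<close>

lemma hpd_sqrt_unique:
  assumes fin: "finite D" and h1: "hpd D S1" and h2: "hpd D S2" and eq: "ein D S1 S1 = ein D S2 S2"
  shows "S1 = S2"
proof -
  define X where "X = (\<lambda>i j. S1 i j - S2 i j)"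
  have c1: "ctrans S1 = S1" and c2: "ctrans S2 = S2" using h1 h2 by (simp_all add: hpd_def)
  have herm: "cnj (X i j) = X j i" for i j
    using fun_cong[OF fun_cong[OF c1, of j], of i] fun_cong[OF fun_cong[OF c2, of j], of i]
    by (simp add: X_def ctrans_def)
  have anticomm: "(\<Sum>k\<in>D. S1 l k * X k j) + (\<Sum>k\<in>D. X l k * S2 k j) = 0" if "l \<in> D" "j \<in> D" for l j
  proof -
    have "(\<Sum>k\<in>D. S1 l k * S1 k j) = (\<Sum>k\<in>D. S2 l k * S2 k j)"
      using fun_cong[OF fun_cong[OF eq, of l], of j] that by (simp add: ein_def)
    thus ?thesis by (simp add: X_def algebra_simps sum_subtractf)
  qed
  define c where "c = (\<lambda>j l. if l \<in> D then X l j else 0)"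
  have vc: "is_vtensor D (c j)" for j by (simp add: is_vtensor_def c_def)
  define q where "q = (\<lambda>S j. tinner D (einv D S (c j)) (c j))"
  have "(\<Sum>j\<in>D. q S1 j + q S2 j)
      = (\<Sum>j\<in>D. \<Sum>l\<in>D. X j l * ((\<Sum>k\<in>D. S1 l k * X k j) + (\<Sum>k\<in>D. X l k * S2 k j)))"
    using sum_tinner_columns(1)[OF herm, of D S1] sum_tinner_columns(2)[OF herm, of D S2]
    by (simp add: q_def c_def sum.distrib distrib_left)
  also have "\<dots> = 0" using anticomm by (simp cong: sum.cong)
  finally have "(\<Sum>j\<in>D. Re (q S1 j + q S2 j)) = 0" by (metis Re_sum zero_complex.sel(1))
  moreover have nonneg: "0 \<le> Re (q S j)" if "hpd D S" for S j
    using hpd_quadratic_nonneg[OF vc that] by (simp add: q_def)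
  ultimately have "Re (q S1 j) = 0" if "j \<in> D" for j
    using fin h1 h2 that by (simp add: sum_nonneg_eq_0_iff add_nonneg_eq_0_iff)
  hence "c j = (\<lambda>i. 0)" if "j \<in> D" for j
    using h1 vc that unfolding hpd_def q_def by fastforce
  hence "X i j = 0" if "i \<in> D" "j \<in> D" for i j using that by (metis c_def)
  thus ?thesis using h1 h2 by (intro tensor_eqI[of D]) (auto simp: X_def hpd_def)
qed

lemma unitary_diag_mult_eq_id_tensor:
  assumes fin: "finite D" and U: "tunitary D U" and inv: "\<And>k. k \<in> D \<Longrightarrow> l1 k * l2 k = 1"
  shows "ein D (unitary_diag D U l1) (unitary_diag D U l2) = id_tensor D"
proof -
  have "unitary_diag D U (\<lambda>k. l1 k * l2 k) = unitary_diag D U (\<lambda>_. 1)"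
    using inv by (rule unitary_diag_cong)
  thus ?thesis by (simp add: unitary_diag_mult[OF fin U] unitary_diag_one[OF fin U])
qed

lemma tsqrt_unitary_diag:
  assumes fin: "finite D" and U: "tunitary D U" and pos: "\<And>k. k \<in> D \<Longrightarrow> l k > 0"
  shows "tsqrt D (unitary_diag D U l) = unitary_diag D U (\<lambda>k. sqrt (l k))"
  unfolding tsqrt_def
proof (rule the1_equality)
  let ?S = "unitary_diag D U (\<lambda>k. sqrt (l k))"
  have "hpd D ?S" using pos by (intro hpd_unitary_diagI[OF fin U]) simp
  moreover have "ein D ?S ?S = unitary_diag D U l"
    unfolding unitary_diag_mult[OF fin U] using pos by (intro unitary_diag_cong) (simp add: abs_of_pos)
  ultimately show S: "hpd D ?S \<and> ein D ?S ?S = unitary_diag D U l" by blast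
  show "\<exists>!S. hpd D S \<and> ein D S S = unitary_diag D U l"
  proof (rule ex1I[of _ ?S])
    fix T assume "hpd D T \<and> ein D T T = unitary_diag D U l"
    thus "T = ?S" using hpd_sqrt_unique[OF fin, of T ?S] S by simp
  qed (rule S)
qed

lemma tinv_unitary_diag:
  assumes fin: "finite D" and U: "tunitary D U" and nz: "\<And>k. k \<in> D \<Longrightarrow> l k \<noteq> 0"
  shows "tinv D (unitary_diag D U l) = unitary_diag D U (\<lambda>k. 1 / l k)"
  by (rule tinv_eqI[OF fin is_tensor_unitary_diag]; rule unitary_diag_mult_eq_id_tensor[OF fin U])
    (simp_all add: nz)

lemma
  assumes fin: "finite D" and h: "hpd D M"
  shows hpd_tsqrt: "hpd D (tsqrt D M)"
    and tsqrt_square: "ein D (tsqrt D M) (tsqrt D M) = M"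
    and is_tensor_tinv_tsqrt: "is_tensor D (tinv D (tsqrt D M))"
    and tsqrt_tinv: "ein D (tsqrt D M) (tinv D (tsqrt D M)) = id_tensor D"
    and tinv_tsqrt: "ein D (tinv D (tsqrt D M)) (tsqrt D M) = id_tensor D"
proof -
  obtain U l where U: "tunitary D U" and pos: "\<And>k. k \<in> D \<Longrightarrow> l k > 0" and M: "M = unitary_diag D U l"
    using hpd_unitary_diag_decomposition[OF fin h] by blast
  have sqrt_pos: "\<And>k. k \<in> D \<Longrightarrow> sqrt (l k) > 0" using pos by simp
  have S: "tsqrt D M = unitary_diag D U (\<lambda>k. sqrt (l k))"
    unfolding M by (rule tsqrt_unitary_diag[OF fin U pos])
  have Si: "tinv D (tsqrt D M) = unitary_diag D U (\<lambda>k. 1 / sqrt (l k))"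
    unfolding S using sqrt_pos by (intro tinv_unitary_diag[OF fin U]) force
  show "hpd D (tsqrt D M)" unfolding S by (rule hpd_unitary_diagI[OF fin U sqrt_pos])
  show "ein D (tsqrt D M) (tsqrt D M) = M"
    unfolding S unitary_diag_mult[OF fin U] unfolding M using pos by (intro unitary_diag_cong) (simp add: abs_of_pos)
  show "is_tensor D (tinv D (tsqrt D M))" unfolding Si by simp
  show "ein D (tsqrt D M) (tinv D (tsqrt D M)) = id_tensor D"
    unfolding Si unfolding S using sqrt_pos by (intro unitary_diag_mult_eq_id_tensor[OF fin U]) force
  show "ein D (tinv D (tsqrt D M)) (tsqrt D M) = id_tensor D"
    unfolding Si unfolding S using sqrt_pos by (intro unitary_diag_mult_eq_id_tensor[OF fin U]) force
qed

section \<open>Moore-Penrose inverses\<close>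

definition is_wmp :: "mindex set \<Rightarrow> tensor \<Rightarrow> tensor \<Rightarrow> tensor \<Rightarrow> tensor \<Rightarrow> bool" where
  "is_wmp D M N A X \<longleftrightarrow> is_tensor D X \<and>
      ein D (ein D A X) A = A \<and> ein D (ein D X A) X = X \<and>
      ctrans (ein D M (ein D A X)) = ein D M (ein D A X) \<and>
      ctrans (ein D N (ein D X A)) = ein D N (ein D X A)"

abbreviation is_mp :: "mindex set \<Rightarrow> tensor \<Rightarrow> tensor \<Rightarrow> bool" where
  "is_mp D \<equiv> is_wmp D (id_tensor D) (id_tensor D)"

lemma wmp_eq_The: "wmp D M N A = (THE X. is_wmp D M N A X)"
  by (simp add: wmp_def is_wmp_def)

lemma is_mp_iff:
  "finite D \<Longrightarrow> is_mp D A X \<longleftrightarrow> is_tensor D X \<and>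
      ein D (ein D A X) A = A \<and> ein D (ein D X A) X = X \<and>
      ctrans (ein D A X) = ein D A X \<and> ctrans (ein D X A) = ein D X A"
  by (simp add: is_wmp_def ein_id_left)

lemma is_mp_unique:
  assumes fin: "finite D" and X: "is_mp D A X" and Y: "is_mp D A Y"
  shows "X = Y"
proof -
  note X' = X[unfolded is_mp_iff[OF fin]] and Y' = Y[unfolded is_mp_iff[OF fin]]
  have "ctrans A = ctrans (ein D (ein D A Y) A)" using Y' by simp
  hence cA: "ctrans A = ein D (ctrans A) (ein D (ctrans Y) (ctrans A))" by (simp add: ctrans_ein ein_assoc)
  have AX: "ein D A X = ein D (ein D A X) (ein D A Y)"
  proof -
    have "ein D A X = ein D (ctrans X) (ctrans A)" using X' by (metis ctrans_ein)
    also have "\<dots> = ein D (ein D (ctrans X) (ctrans A)) (ein D (ctrans Y) (ctrans A))"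
      by (subst cA) (simp add: ein_assoc)
    also have "\<dots> = ein D (ein D A X) (ein D A Y)" using X' Y' by (metis ctrans_ein)
    finally show ?thesis .
  qed
  have "ctrans A = ctrans (ein D (ein D A X) A)" using X' by simp
  hence cA2: "ctrans A = ein D (ctrans A) (ein D (ctrans X) (ctrans A))" by (simp add: ctrans_ein ein_assoc)
  have YA: "ein D Y A = ein D (ein D X A) (ein D Y A)"
  proof -
    have "ein D Y A = ein D (ctrans A) (ctrans Y)" using Y' by (metis ctrans_ein)
    also have "\<dots> = ein D (ein D (ctrans A) (ctrans X)) (ein D (ctrans A) (ctrans Y))"
      by (subst cA2) (simp add: ein_assoc)
    also have "\<dots> = ein D (ein D X A) (ein D Y A)" using X' Y' by (metis ctrans_ein)
    finally show ?thesis .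
  qed
  have "X = ein D X (ein D A X)" using X' by (simp add: ein_assoc)
  also have "\<dots> = ein D (ein D (ein D X A) X) (ein D A Y)" by (subst AX) (simp add: ein_assoc)
  also have "\<dots> = ein D X (ein D A Y)" using X' by simp
  also have "\<dots> = ein D (ein D X A) (ein D (ein D Y A) Y)" using Y' by (simp add: ein_assoc)
  also have "\<dots> = ein D (ein D (ein D X A) (ein D Y A)) Y" by (simp add: ein_assoc)
  also have "\<dots> = Y" using YA Y' by simp
  finally show ?thesis .
qed

lemma ein_unitary_diag_kernel:
  assumes fin: "finite D" and U: "tunitary D U" and H: "ein D (ctrans A) A = unitary_diag D U l"
    and g: "\<And>k. k \<in> D \<Longrightarrow> g k * l k = 0"
  shows "ein D A (unitary_diag D U g) = (\<lambda>i j. 0)"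
proof (rule gram_eq_zero_imp_zero[OF fin is_tensor_ein])
  have "ein D (ctrans (ein D A (unitary_diag D U g))) (ein D A (unitary_diag D U g))
      = ein D (unitary_diag D U g) (ein D (ein D (ctrans A) A) (unitary_diag D U g))"
    by (simp add: ctrans_ein ein_assoc)
  also have "\<dots> = unitary_diag D U (\<lambda>_. 0)"
    unfolding H unitary_diag_mult[OF fin U] by (intro unitary_diag_cong) (simp add: g mult.assoc[symmetric])
  finally show "ein D (ctrans (ein D A (unitary_diag D U g))) (ein D A (unitary_diag D U g)) = (\<lambda>i j. 0)"
    unfolding unitary_diag_zero .
qed

text \<open>With \<open>A\<^sup>H A = U diag(l) U\<^sup>H\<close>, the Moore-Penrose inverse is \<open>P A\<^sup>H\<close> for
  \<open>P = U diag(l\<^sup>+) U\<^sup>H\<close>, where \<open>l\<^sup>+\<close> inverts the nonzero entries of \<open>l\<close>.\<close>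

lemma ex_mp:
  assumes fin: "finite D" and tA: "is_tensor D A"
  shows "\<exists>X. is_mp D A X"
proof -
  define H where "H = ein D (ctrans A) A"
  have "is_tensor D H" "ctrans H = H" by (simp_all add: H_def ctrans_ein)
  then obtain U l where U: "tunitary D U" "H = unitary_diag D U l"
    using hermitian_spectral_decomposition[OF fin] by blast
  define f where "f = (\<lambda>t::real. if t = 0 then 0 else 1 / t)"
  define P where "P = unitary_diag D U (\<lambda>k. f (l k))"
  define E where "E = unitary_diag D U (\<lambda>k. f (l k) * l k)"
  note diag_mult = unitary_diag_mult[OF fin U(1)]
  have PH: "ein D P H = E" unfolding P_def E_def U(2) diag_mult ..
  have PHP: "ein D P (ein D H P) = P" unfolding P_def U(2) diag_mult
    by (rule unitary_diag_cong) (simp add: f_def)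
  define G where "G = unitary_diag D U (\<lambda>k. 1 - f (l k) * l k)"
  have AG: "ein D A G = (\<lambda>i j. 0)"
    using U(2) unfolding H_def G_def by (rule ein_unitary_diag_kernel[OF fin U(1)]) (simp add: f_def)
  have "tadd E G = id_tensor D"
    unfolding E_def G_def unitary_diag_add[OF fin] unitary_diag_one[OF fin U(1), symmetric] by simp
  hence "A = ein D A (tadd E G)" using tA fin by (simp add: ein_id_right)
  also have "\<dots> = ein D A E" unfolding ein_tadd AG by (simp add: tadd_def)
  finally have AE: "ein D A E = A" by simp
  define X where "X = ein D P (ctrans A)"
  have "ein D (ein D A X) A = A" using AE unfolding X_def E_def[symmetric] PH[symmetric] H_def
    by (simp add: ein_assoc)
  moreover have "ein D (ein D X A) X = X"
    using arg_cong[OF PHP, of "\<lambda>Z. ein D Z (ctrans A)"] unfolding X_def H_def by (simp add: ein_assoc)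
  moreover have "ctrans (ein D A X) = ein D A X" by (simp add: X_def P_def ctrans_ein ein_assoc)
  moreover have "ein D X A = E" unfolding X_def PH[symmetric] H_def by (simp add: ein_assoc)
  hence "ctrans (ein D X A) = ein D X A" by (simp add: E_def)
  ultimately have "is_mp D A X" unfolding is_mp_iff[OF fin] by (simp add: X_def)
  thus ?thesis by blast
qed

lemma is_mp_mpinv:
  assumes fin: "finite D" and tA: "is_tensor D A"
  shows "is_mp D A (mpinv D A)"
proof -
  obtain X where X: "is_mp D A X" using ex_mp[OF fin tA] by blast
  hence "\<exists>!X. is_mp D A X" using is_mp_unique[OF fin] by blast
  thus ?thesis unfolding mpinv_def wmp_eq_The by (rule theI')
qed

section \<open>Operator norm and numerical radius\<close>

definition opnorm :: "mindex set \<Rightarrow> tensor \<Rightarrow> real" where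
  "opnorm D B = Sup {tnorm D (einv D B Y) | Y. is_vtensor D Y \<and> tnorm D Y = 1}"

lemma cmod_le_tnorm:
  assumes "finite D" "k \<in> D"
  shows "cmod (Y k) \<le> tnorm D Y"
proof -
  have "(cmod (Y k))\<^sup>2 \<le> (\<Sum>i\<in>D. (cmod (Y i))\<^sup>2)" using assms by (intro member_le_sum) auto
  also have "\<dots> = (tnorm D Y)\<^sup>2" by (simp add: tnorm_power2 Re_tinner_self)
  finally show ?thesis using tnorm_nonneg[of D Y] by (simp add: abs_le_square_iff)
qed

lemma cmod_einv_le:
  assumes fin: "finite D" and i: "i \<in> D"
  shows "cmod (einv D B Y i) \<le> (\<Sum>k\<in>D. cmod (B i k)) * tnorm D Y"
proof -
  have "cmod (einv D B Y i) = cmod (\<Sum>k\<in>D. B i k * Y k)" using i by (simp add: einv_def)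
  also have "\<dots> \<le> (\<Sum>k\<in>D. cmod (B i k * Y k))" by (rule norm_sum)
  also have "\<dots> = (\<Sum>k\<in>D. cmod (B i k) * cmod (Y k))" by (simp add: norm_mult)
  also have "\<dots> \<le> (\<Sum>k\<in>D. cmod (B i k) * tnorm D Y)"
    by (intro sum_mono mult_left_mono cmod_le_tnorm[OF fin]) auto
  finally show ?thesis by (simp add: sum_distrib_right)
qed

lemma bdd_above_opnorm:
  assumes fin: "finite D"
  shows "bdd_above {tnorm D (einv D B Y) | Y. is_vtensor D Y \<and> tnorm D Y = 1}"
proof -
  define C where "C = sqrt (\<Sum>i\<in>D. (\<Sum>k\<in>D. cmod (B i k))\<^sup>2)"
  have "tnorm D (einv D B Y) \<le> C" if Y: "tnorm D Y = 1" for Y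
  proof -
    have "(tnorm D (einv D B Y))\<^sup>2 = (\<Sum>i\<in>D. (cmod (einv D B Y i))\<^sup>2)"
      by (simp add: tnorm_power2 Re_tinner_self)
    also have "\<dots> \<le> (\<Sum>i\<in>D. (\<Sum>k\<in>D. cmod (B i k))\<^sup>2)"
      using cmod_einv_le[OF fin, of _ B Y] Y by (intro sum_mono power_mono) auto
    finally show ?thesis unfolding C_def using tnorm_nonneg by (metis real_le_rsqrt)
  qed
  thus ?thesis by (auto intro!: bdd_aboveI[of _ C])
qed

lemma bdd_above_numrad:
  assumes fin: "finite D"
  shows "bdd_above {cmod (tinner D (einv D B X) X) | X. is_vtensor D X \<and> tnorm D X = 1}"
proof -
  define C where "C = (\<Sum>i\<in>D. \<Sum>k\<in>D. cmod (B i k))"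
  have "cmod (tinner D (einv D B X) X) \<le> C" if X: "tnorm D X = 1" for X
  proof -
    have "cmod (tinner D (einv D B X) X) \<le> (\<Sum>i\<in>D. cmod (cnj (X i) * einv D B X i))"
      unfolding tinner_def by (rule norm_sum)
    also have "\<dots> = (\<Sum>i\<in>D. cmod (X i) * cmod (einv D B X i))" by (simp add: norm_mult)
    also have "\<dots> \<le> C" unfolding C_def
    proof (intro sum_mono)
      fix i assume i: "i \<in> D"
      have "cmod (X i) * cmod (einv D B X i) \<le> tnorm D X * ((\<Sum>k\<in>D. cmod (B i k)) * tnorm D X)"
        by (rule mult_mono[OF cmod_le_tnorm[OF fin i] cmod_einv_le[OF fin i]]) (simp_all add: tnorm_nonneg)
      thus "cmod (X i) * cmod (einv D B X i) \<le> (\<Sum>k\<in>D. cmod (B i k))" using X by simp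
    qed
    finally show ?thesis .
  qed
  thus ?thesis by (auto intro!: bdd_aboveI[of _ C])
qed

lemma tnorm_einv_le_opnorm:
  assumes fin: "finite D" and Y: "is_vtensor D Y"
  shows "tnorm D (einv D B Y) \<le> opnorm D B * tnorm D Y"
proof (cases "tnorm D Y = 0")
  case True
  thus ?thesis using tnorm_eq_0_iff[OF fin Y] by (simp add: tnorm_def tinner_def)
next
  case False
  define t where "t = tnorm D Y"
  have t: "t > 0" using False tnorm_nonneg[of D Y] t_def by simp
  define u where "u = (\<lambda>i. of_real (1 / t) * Y i)"
  have "is_vtensor D u" "tnorm D u = 1" using tnorm_normalize[OF Y] t by (simp_all add: u_def t_def)
  hence "tnorm D (einv D B u) \<le> opnorm D B" unfolding opnorm_def
    by (intro cSup_upper[OF _ bdd_above_opnorm[OF fin]]) blast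
  also have "tnorm D (einv D B u) = (1 / t) * tnorm D (einv D B Y)"
    unfolding u_def einv_scale tnorm_scale using t by (simp add: norm_divide)
  finally show ?thesis using t by (simp add: t_def field_simps)
qed

lemma opnorm_nonneg:
  assumes fin: "finite D" and ne: "D \<noteq> {}"
  shows "0 \<le> opnorm D B"
proof -
  obtain d where d: "d \<in> D" using ne by blast
  have "0 \<le> tnorm D (einv D B (delta d))" by (rule tnorm_nonneg)
  also have "\<dots> \<le> opnorm D B"
    using tnorm_einv_le_opnorm[OF fin is_vtensor_delta[OF d]] tnorm_delta[OF fin d] by simp
  finally show ?thesis .
qed

lemma quadratic_le_numrad:
  assumes fin: "finite D" and X: "is_vtensor D X"
  shows "cmod (tinner D (einv D B X) X) \<le> numrad D B * (tnorm D X)\<^sup>2"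
proof (cases "tnorm D X = 0")
  case True
  thus ?thesis using tnorm_eq_0_iff[OF fin X] by (simp add: tinner_def)
next
  case False
  define t where "t = tnorm D X"
  have t: "t > 0" using False tnorm_nonneg[of D X] t_def by simp
  define u where "u = (\<lambda>i. of_real (1 / t) * X i)"
  have "is_vtensor D u" "tnorm D u = 1" using tnorm_normalize[OF X] t by (simp_all add: u_def t_def)
  hence "cmod (tinner D (einv D B u) u) \<le> numrad D B" unfolding numrad_def
    by (intro cSup_upper[OF _ bdd_above_numrad[OF fin]]) blast
  also have "tinner D (einv D B u) u = of_real (1 / t) * of_real (1 / t) * tinner D (einv D B X) X"
    unfolding u_def einv_scale tinner_scale_left tinner_scale_right by simp
  finally have "(1 / t) * (1 / t) * cmod (tinner D (einv D B X) X) \<le> numrad D B"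
    using t by (simp add: norm_mult norm_divide)
  thus ?thesis using t by (simp add: t_def field_simps power2_eq_square)
qed

lemma tinner_polarization:
  fixes D :: "mindex set" and B :: tensor and x y :: vtensor
  defines "q \<equiv> \<lambda>c. tinner D (einv D B (\<lambda>i. x i + c * y i)) (\<lambda>i. x i + c * y i)"
  shows "4 * tinner D (einv D B x) y = q 1 + \<i> * q \<i> - q (-1) - \<i> * q (-\<i>)"
  unfolding q_def einv_add_scale tinner_add_scale by (simp add: algebra_simps)

lemma sum_tnorm_rotations:
  fixes D :: "mindex set" and x y :: vtensor
  assumes "tnorm D x = 1" "tnorm D y = 1"
  defines "r \<equiv> \<lambda>c. Re (tinner D (\<lambda>i. x i + c * y i) (\<lambda>i. x i + c * y i))"
  shows "r 1 + r \<i> + r (-1) + r (-\<i>) = 8"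
proof -
  have "tinner D x x = 1" "tinner D y y = 1"
    using assms(1,2) tnorm_power2[of D x] tnorm_power2[of D y] tinner_self_of_Re[of D x]
      tinner_self_of_Re[of D y] by simp_all
  thus ?thesis unfolding r_def tinner_add_scale by (simp add: algebra_simps)
qed

lemma cmod_tinner_le_numrad:
  assumes fin: "finite D" and x: "is_vtensor D x" "tnorm D x = 1" and y: "is_vtensor D y" "tnorm D y = 1"
  shows "cmod (tinner D (einv D B x) y) \<le> 2 * numrad D B"
proof -
  define w where "w = numrad D B"
  define q where "q = (\<lambda>c. tinner D (einv D B (\<lambda>i. x i + c * y i)) (\<lambda>i. x i + c * y i))"
  define r where "r = (\<lambda>c. Re (tinner D (\<lambda>i. x i + c * y i) (\<lambda>i. x i + c * y i)))"
  have q_le: "cmod (q c) \<le> w * r c" for c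
  proof -
    have "is_vtensor D (\<lambda>i. x i + c * y i)" using x y by (simp add: is_vtensor_def)
    from quadratic_le_numrad[OF fin this, of B] show ?thesis by (simp add: q_def r_def w_def tnorm_power2)
  qed
  have "4 * cmod (tinner D (einv D B x) y) = cmod (q 1 + \<i> * q \<i> - q (-1) - \<i> * q (-\<i>))"
    unfolding q_def tinner_polarization[symmetric] by (simp add: norm_mult)
  also have "\<dots> \<le> cmod (q 1) + cmod (q \<i>) + cmod (q (-1)) + cmod (q (-\<i>))"
  proof -
    have "cmod (q 1 + \<i> * q \<i> - q (-1) - \<i> * q (-\<i>)) \<le> cmod (q 1 + \<i> * q \<i> - q (-1)) + cmod (\<i> * q (-\<i>))"
      "cmod (q 1 + \<i> * q \<i> - q (-1)) \<le> cmod (q 1 + \<i> * q \<i>) + cmod (q (-1))"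
      by (rule norm_triangle_ineq4)+
    moreover have "cmod (q 1 + \<i> * q \<i>) \<le> cmod (q 1) + cmod (\<i> * q \<i>)" by (rule norm_triangle_ineq)
    ultimately show ?thesis by (simp add: norm_mult)
  qed
  also have "\<dots> \<le> w * (r 1 + r \<i> + r (-1) + r (-\<i>))"
    using q_le[of 1] q_le[of \<i>] q_le[of "-1"] q_le[of "-\<i>"] by (simp add: algebra_simps)
  also have "r 1 + r \<i> + r (-1) + r (-\<i>) = 8" unfolding r_def by (rule sum_tnorm_rotations[OF x(2) y(2)])
  finally show ?thesis by (simp add: w_def)
qed

lemma tnorm_einv_le_numrad:
  assumes fin: "finite D" and x: "is_vtensor D x" "tnorm D x = 1"
  shows "tnorm D (einv D B x) \<le> 2 * numrad D B"
proof (cases "tnorm D (einv D B x) = 0")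
  case True
  have "cmod (tinner D (einv D B x) x) \<le> numrad D B" using quadratic_le_numrad[OF fin x(1), of B] x(2) by simp
  hence "0 \<le> numrad D B" by (meson norm_ge_zero order_trans)
  thus ?thesis using True by simp
next
  case False
  define t where "t = tnorm D (einv D B x)"
  have t: "t > 0" using False tnorm_nonneg[of D "einv D B x"] t_def by simp
  define y where "y = (\<lambda>i. of_real (1 / t) * einv D B x i)"
  have y: "is_vtensor D y" "tnorm D y = 1"
    using tnorm_normalize[OF is_vtensor_einv] t by (simp_all add: y_def t_def)
  have "tinner D (einv D B x) y = of_real (1 / t) * tinner D (einv D B x) (einv D B x)"
    unfolding y_def tinner_scale_right by simp
  also have "tinner D (einv D B x) (einv D B x) = of_real (t\<^sup>2)"
    by (simp add: t_def tnorm_power2 tinner_self del: of_real_power)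
  finally have "tinner D (einv D B x) y = of_real t" using t by (simp add: power2_eq_square)
  thus ?thesis using cmod_tinner_le_numrad[OF fin x y, of B] t by (simp add: t_def)
qed

lemma opnorm_le_numrad:
  assumes fin: "finite D" and ne: "D \<noteq> {}"
  shows "opnorm D B \<le> 2 * numrad D B"
  unfolding opnorm_def
proof (rule cSup_least)
  obtain d where "d \<in> D" using ne by blast
  thus "{tnorm D (einv D B Y) | Y. is_vtensor D Y \<and> tnorm D Y = 1} \<noteq> {}"
    using is_vtensor_delta tnorm_delta[OF fin] by blast
qed (use tnorm_einv_le_numrad[OF fin] in blast)

lemma one_le_opnorm_mult_mpinv:
  assumes fin: "finite D" and tB: "is_tensor D B" and nz: "B \<noteq> (\<lambda>i j. 0)"
  shows "1 \<le> opnorm D B * opnorm D (mpinv D B)"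
proof -
  obtain i j where ij: "B i j \<noteq> 0" using nz by (meson ext)
  have i: "i \<in> D" and j: "j \<in> D" using ij tB by (auto simp: is_tensor_def)
  define y where "y = einv D B (delta j)"
  have y: "is_vtensor D y" by (simp add: y_def)
  have "y i \<noteq> 0" using ij i by (simp add: y_def einv_delta[OF fin j])
  hence ty: "tnorm D y > 0" using tnorm_eq_0_iff[OF fin y] tnorm_nonneg[of D y] by fastforce
  have "ein D (ein D B (mpinv D B)) B = B" using is_mp_mpinv[OF fin tB] by (simp add: is_wmp_def)
  hence "einv D B (einv D (mpinv D B) y) = y" unfolding y_def by (metis einv_ein)
  hence "tnorm D y \<le> opnorm D B * tnorm D (einv D (mpinv D B) y)"
    using tnorm_einv_le_opnorm[OF fin is_vtensor_einv, of B] by metis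
  also have "\<dots> \<le> opnorm D B * (opnorm D (mpinv D B) * tnorm D y)"
    using tnorm_einv_le_opnorm[OF fin y] opnorm_nonneg[OF fin] i by (intro mult_left_mono) auto
  finally show ?thesis using ty by (simp add: mult.assoc)
qed

lemma opnorm_mult_le_numrad:
  assumes "finite D" and "D \<noteq> {}"
  shows "opnorm D B * opnorm D C \<le> 4 * numrad D B * numrad D C"
proof -
  have "opnorm D B \<le> 2 * numrad D B" "opnorm D C \<le> 2 * numrad D C"
    and "0 \<le> opnorm D B" "0 \<le> opnorm D C"
    using opnorm_le_numrad[OF assms] opnorm_nonneg[OF assms] by auto
  hence "opnorm D B * opnorm D C \<le> (2 * numrad D B) * (2 * numrad D C)"
    by (intro mult_mono) linarith+
  thus ?thesis by simp
qed

section \<open>Reduction of weighted norms to Euclidean ones\<close>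

lemma wnorm_square_eq_tnorm: "ctrans S = S \<Longrightarrow> wnorm D (ein D S S) Z = tnorm D (einv D S Z)"
  unfolding wnorm_def tnorm_def einv_ein tinner_einv_adjoint by simp

lemma unit_sphere_change_of_variables:
  assumes f: "\<And>X. is_vtensor D X \<Longrightarrow> f X = g (einv D T X)"
    and h: "\<And>X. is_vtensor D X \<Longrightarrow> h X = tnorm D (einv D T X)"
    and inv: "\<And>Y. is_vtensor D Y \<Longrightarrow> einv D T (einv D Ti Y) = Y"
  shows "{f X | X. is_vtensor D X \<and> h X = 1} = {g Y | Y. is_vtensor D Y \<and> tnorm D Y = 1}"
proof (rule equalityI; rule subsetI)
  fix v assume "v \<in> {f X | X. is_vtensor D X \<and> h X = 1}"
  then obtain X where X: "is_vtensor D X" "h X = 1" "v = f X" by blast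
  thus "v \<in> {g Y | Y. is_vtensor D Y \<and> tnorm D Y = 1}"
    using f[OF X(1)] h[OF X(1)] by (intro CollectI exI[of _ "einv D T X"]) simp
next
  fix v assume "v \<in> {g Y | Y. is_vtensor D Y \<and> tnorm D Y = 1}"
  then obtain Y where Y: "is_vtensor D Y" "tnorm D Y = 1" "v = g Y" by blast
  have vX: "is_vtensor D (einv D Ti Y)" by simp
  thus "v \<in> {f X | X. is_vtensor D X \<and> h X = 1}"
    using f[OF vX] h[OF vX] inv[OF Y(1)] Y by (intro CollectI exI[of _ "einv D Ti Y"]) simp
qed

text \<open>\<open>S\<close> and \<open>T\<close> play the roles of \<open>M\<^sup>1\<^sup>/\<^sup>2\<close> and \<open>N\<^sup>1\<^sup>/\<^sup>2\<close>, with inverses \<open>Si\<close> and \<open>Ti\<close>.\<close>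

locale weight_roots =
  fixes D :: "mindex set" and S Si T Ti A :: tensor
  assumes fin: "finite D" and tA: "is_tensor D A"
    and tS: "is_tensor D S" and tSi: "is_tensor D Si" and tT: "is_tensor D T" and tTi: "is_tensor D Ti"
    and hS: "ctrans S = S" and hT: "ctrans T = T"
    and S_Si: "ein D S Si = id_tensor D" and Si_S: "ein D Si S = id_tensor D"
    and T_Ti: "ein D T Ti = id_tensor D" and Ti_T: "ein D Ti T = id_tensor D"
begin

abbreviation "A_tilde \<equiv> ein D (ein D S A) Ti"

lemma inverse_cancel [simp]:
  assumes "is_tensor D Z"
  shows "ein D S (ein D Si Z) = Z" "ein D Si (ein D S Z) = Z"
    "ein D T (ein D Ti Z) = Z" "ein D Ti (ein D T Z) = Z"
  using assms fin S_Si Si_S T_Ti Ti_T by (simp_all add: ein_cancel_left)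

lemma ctrans_inverses: "ctrans Si = Si" "ctrans Ti = Ti"
proof -
  have "ein D (ctrans Si) S = id_tensor D" using arg_cong[OF S_Si, of ctrans] by (simp add: ctrans_ein hS)
  thus "ctrans Si = Si" using ein_inverse_unique[OF fin _ tSi _ S_Si] tSi by simp
  have "ein D (ctrans Ti) T = id_tensor D" using arg_cong[OF T_Ti, of ctrans] by (simp add: ctrans_ein hT)
  thus "ctrans Ti = Ti" using ein_inverse_unique[OF fin _ tTi _ T_Ti] tTi by simp
qed

lemma A_eq_conj: "A = ein D Si (ein D A_tilde T)"
  using tA tTi by (simp add: ein_assoc Ti_T ein_id_right[OF fin])

lemma is_wmp_imp_is_mp:
  assumes X: "is_wmp D (ein D S S) (ein D T T) A X"
  shows "is_mp D A_tilde (ein D T (ein D X Si))"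
proof -
  have tX: "is_tensor D X" and AXA: "ein D (ein D A X) A = A" and XAX: "ein D (ein D X A) X = X"
    and h1: "ctrans (ein D (ein D S S) (ein D A X)) = ein D (ein D S S) (ein D A X)"
    and h2: "ctrans (ein D (ein D T T) (ein D X A)) = ein D (ein D T T) (ein D X A)"
    using X by (auto simp: is_wmp_def)
  have r1: "ein D A (ein D X (ein D A Z)) = ein D A Z" for Z using AXA by (metis ein_assoc)
  have r2: "ein D X (ein D A (ein D X Z)) = ein D X Z" for Z using XAX by (metis ein_assoc)
  note [simp] = tX tA tS tSi tT tTi
  define P where "P = ein D (ein D S S) (ein D A X)"
  define Q where "Q = ein D (ein D T T) (ein D X A)"
  have e1: "ein D A_tilde (ein D T (ein D X Si)) = ein D Si (ein D P Si)"
    by (simp add: P_def ein_assoc)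
  have e2: "ein D (ein D T (ein D X Si)) A_tilde = ein D Ti (ein D Q Ti)"
    by (simp add: Q_def ein_assoc)
  show ?thesis unfolding is_mp_iff[OF fin]
  proof (intro conjI)
    show "is_tensor D (ein D T (ein D X Si))" by simp
    show "ein D (ein D A_tilde (ein D T (ein D X Si))) A_tilde = A_tilde"
      by (simp add: ein_assoc r1)
    show "ein D (ein D (ein D T (ein D X Si)) A_tilde) (ein D T (ein D X Si)) = ein D T (ein D X Si)"
      by (simp add: ein_assoc r2)
    show "ctrans (ein D A_tilde (ein D T (ein D X Si))) = ein D A_tilde (ein D T (ein D X Si))"
      unfolding e1 using h1[folded P_def] by (simp add: ctrans_ein ctrans_inverses ein_assoc)
    show "ctrans (ein D (ein D T (ein D X Si)) A_tilde) = ein D (ein D T (ein D X Si)) A_tilde"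
      unfolding e2 using h2[folded Q_def] by (simp add: ctrans_ein ctrans_inverses ein_assoc)
  qed
qed

lemma is_mp_imp_is_wmp:
  assumes Y: "is_mp D A_tilde Y"
  shows "is_wmp D (ein D S S) (ein D T T) A (ein D Ti (ein D Y S))"
proof -
  have tY: "is_tensor D Y" and s0: "ein D (ein D A_tilde Y) A_tilde = A_tilde"
    and s0': "ein D (ein D Y A_tilde) Y = Y"
    and h1: "ctrans (ein D A_tilde Y) = ein D A_tilde Y" and h2: "ctrans (ein D Y A_tilde) = ein D Y A_tilde"
    using Y unfolding is_mp_iff[OF fin] by auto
  note [simp] = tY tA tS tSi tT tTi
  define P where "P = ein D A_tilde Y"
  define Q where "Q = ein D Y A_tilde"
  have e1: "ein D (ein D S S) (ein D A (ein D Ti (ein D Y S))) = ein D S (ein D P S)"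
    by (subst A_eq_conj) (simp add: P_def ein_assoc)
  have e2: "ein D (ein D T T) (ein D (ein D Ti (ein D Y S)) A) = ein D T (ein D Q T)"
    by (subst A_eq_conj) (simp add: Q_def ein_assoc)
  show ?thesis unfolding is_wmp_def
  proof (intro conjI)
    show "is_tensor D (ein D Ti (ein D Y S))" by simp
    have "ein D (ein D A (ein D Ti (ein D Y S))) A = ein D Si (ein D (ein D (ein D A_tilde Y) A_tilde) T)"
      by (simp add: ein_assoc Ti_T ein_id_right[OF fin])
    thus "ein D (ein D A (ein D Ti (ein D Y S))) A = A" by (simp only: s0 A_eq_conj[symmetric])
    have "ein D (ein D (ein D Ti (ein D Y S)) A) (ein D Ti (ein D Y S))
        = ein D Ti (ein D (ein D (ein D Y A_tilde) Y) S)"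
      by (simp add: ein_assoc)
    thus "ein D (ein D (ein D Ti (ein D Y S)) A) (ein D Ti (ein D Y S)) = ein D Ti (ein D Y S)"
      by (simp only: s0')
    show "ctrans (ein D (ein D S S) (ein D A (ein D Ti (ein D Y S))))
        = ein D (ein D S S) (ein D A (ein D Ti (ein D Y S)))"
      unfolding e1 using h1[folded P_def] by (simp add: ctrans_ein hS ein_assoc)
    show "ctrans (ein D (ein D T T) (ein D (ein D Ti (ein D Y S)) A))
        = ein D (ein D T T) (ein D (ein D Ti (ein D Y S)) A)"
      unfolding e2 using h2[folded Q_def] by (simp add: ctrans_ein hT ein_assoc)
  qed
qed

lemma wmp_eq: "wmp D (ein D S S) (ein D T T) A = ein D Ti (ein D (mpinv D A_tilde) S)"
  unfolding wmp_eq_The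
proof (rule the1_equality)
  have Y: "is_mp D A_tilde (mpinv D A_tilde)" by (rule is_mp_mpinv[OF fin]) (simp add: tS tA tTi)
  thus X: "is_wmp D (ein D S S) (ein D T T) A (ein D Ti (ein D (mpinv D A_tilde) S))"
    by (rule is_mp_imp_is_wmp)
  show "\<exists>!X. is_wmp D (ein D S S) (ein D T T) A X"
  proof (rule ex1I, rule X)
    fix X' assume X': "is_wmp D (ein D S S) (ein D T T) A X'"
    hence "ein D T (ein D X' Si) = mpinv D A_tilde"
      using is_mp_unique[OF fin is_wmp_imp_is_mp Y] by blast
    hence "ein D Ti (ein D (mpinv D A_tilde) S) = ein D Ti (ein D (ein D T (ein D X' Si)) S)" by simp
    also have "\<dots> = X'"
      using X' tSi tS by (simp add: is_wmp_def ein_assoc Si_S ein_id_right[OF fin])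
    finally show "X' = ein D Ti (ein D (mpinv D A_tilde) S)" by simp
  qed
qed

lemma wopnorm_eq_opnorm: "wopnorm D (ein D S S) (ein D T T) A = opnorm D A_tilde"
proof -
  have "{wnorm D (ein D S S) (einv D A X) | X. is_vtensor D X \<and> wnorm D (ein D T T) X = 1}
      = {tnorm D (einv D A_tilde Y) | Y. is_vtensor D Y \<and> tnorm D Y = 1}"
  proof (rule unit_sphere_change_of_variables[where T = T and Ti = Ti])
    fix X assume X: "is_vtensor D X"
    show "wnorm D (ein D S S) (einv D A X) = tnorm D (einv D A_tilde (einv D T X))"
      unfolding wnorm_square_eq_tnorm[OF hS] einv_ein einv_cancel[OF fin Ti_T X] ..
    show "wnorm D (ein D T T) X = tnorm D (einv D T X)" unfolding wnorm_square_eq_tnorm[OF hT] ..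
  qed (rule einv_cancel[OF fin T_Ti])
  thus ?thesis by (simp add: wopnorm_def opnorm_def)
qed

lemma wopnorm_wmp_eq_opnorm:
  "wopnorm D (ein D T T) (ein D S S) (wmp D (ein D S S) (ein D T T) A) = opnorm D (mpinv D A_tilde)"
proof -
  have "{wnorm D (ein D T T) (einv D (wmp D (ein D S S) (ein D T T) A) X) | X.
          is_vtensor D X \<and> wnorm D (ein D S S) X = 1}
      = {tnorm D (einv D (mpinv D A_tilde) Y) | Y. is_vtensor D Y \<and> tnorm D Y = 1}"
  proof (rule unit_sphere_change_of_variables[where T = S and Ti = Si])
    fix X assume X: "is_vtensor D X"
    show "wnorm D (ein D T T) (einv D (wmp D (ein D S S) (ein D T T) A) X)
        = tnorm D (einv D (mpinv D A_tilde) (einv D S X))"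
      unfolding wmp_eq wnorm_square_eq_tnorm[OF hT] einv_ein einv_cancel[OF fin T_Ti is_vtensor_einv] ..
    show "wnorm D (ein D S S) X = tnorm D (einv D S X)" unfolding wnorm_square_eq_tnorm[OF hS] ..
  qed (rule einv_cancel[OF fin S_Si])
  thus ?thesis by (simp add: wopnorm_def opnorm_def)
qed

lemma A_tilde_nonzero:
  assumes "A \<noteq> (\<lambda>i j. 0)"
  shows "A_tilde \<noteq> (\<lambda>i j. 0)"
proof
  assume A0: "A_tilde = (\<lambda>i j. 0)"
  have "A = ein D Si (ein D (\<lambda>i j. 0) T)" by (subst A_eq_conj) (simp only: A0)
  also have "\<dots> = (\<lambda>i j. 0)" by (intro ext) (simp add: ein_def)
  finally show False using assms by simp
qed

end

lemma finite_idx: "finite (idx I N)"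
proof -
  have "inj_on (\<lambda>f. restrict f {..<N}) (idx I N)"
  proof (rule inj_onI)
    fix f g assume f: "f \<in> idx I N" and g: "g \<in> idx I N"
      and eq: "restrict f {..<N} = restrict g {..<N}"
    show "f = g"
    proof
      fix k show "f k = g k"
        using fun_cong[OF eq, of k] f g by (cases "k < N") (simp_all add: idx_def)
    qed
  qed
  moreover have "(\<lambda>f. restrict f {..<N}) ` idx I N \<subseteq> PiE {..<N} (\<lambda>k. {..<I k})"
    by (intro image_subsetI) (simp add: restrict_PiE_iff idx_def)
  hence "finite ((\<lambda>f. restrict f {..<N}) ` idx I N)" by (rule finite_subset) (simp add: finite_PiE)
  ultimately show ?thesis using finite_imageD by blast
qed

theorem theorem6p16:
  fixes I :: "nat \<Rightarrow> nat" and N :: nat and A M Nw :: tensor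
  defines "D \<equiv> idx I N"
  assumes "is_tensor D A" and "A \<noteq> zero_tensor"
    and "hpd D M" and "hpd D Nw"
  shows "1 \<le> wopnorm D M Nw A * wopnorm D Nw M (wmp D M Nw A)
       \<and> wopnorm D M Nw A * wopnorm D Nw M (wmp D M Nw A)
           \<le> 4 * numrad D (ein D (ein D (tsqrt D M) A) (tinv D (tsqrt D Nw)))
               * numrad D (mpinv D (ein D (ein D (tsqrt D M) A) (tinv D (tsqrt D Nw))))"
proof -
  note tA = assms(2) and hM = assms(4) and hN = assms(5)
  have fin: "finite D" unfolding D_def by (rule finite_idx)
  have A0: "A \<noteq> (\<lambda>i j. 0)" using assms(3) by (simp add: zero_tensor_def)
  hence ne: "D \<noteq> {}" using tA by (auto simp: is_tensor_def)
  have "hpd D (tsqrt D M)" "hpd D (tsqrt D Nw)" using hpd_tsqrt[OF fin] hM hN by blast+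
  then interpret weight_roots D "tsqrt D M" "tinv D (tsqrt D M)" "tsqrt D Nw" "tinv D (tsqrt D Nw)" A
    using fin tA is_tensor_tinv_tsqrt[OF fin hM] is_tensor_tinv_tsqrt[OF fin hN]
      tsqrt_tinv[OF fin hM] tsqrt_tinv[OF fin hN] tinv_tsqrt[OF fin hM] tinv_tsqrt[OF fin hN]
    by unfold_locales (simp_all add: hpd_def)
  have "wopnorm D M Nw A = opnorm D A_tilde"
    using wopnorm_eq_opnorm unfolding tsqrt_square[OF fin hM] tsqrt_square[OF fin hN] .
  moreover have "wopnorm D Nw M (wmp D M Nw A) = opnorm D (mpinv D A_tilde)"
    using wopnorm_wmp_eq_opnorm unfolding tsqrt_square[OF fin hM] tsqrt_square[OF fin hN] .
  moreover have "1 \<le> opnorm D A_tilde * opnorm D (mpinv D A_tilde)"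
    using one_le_opnorm_mult_mpinv[OF fin _ A_tilde_nonzero[OF A0]] by simp
  ultimately show ?thesis using opnorm_mult_le_numrad[OF fin ne] by simp
qed

end
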